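(* For each $s$ let $\mathbb F_s$ be a finite field of $q_s$ elements with $q_s$ a power of a prime $p_s$, and assume that there is no prime $p$ with $\{s: p_s=p\}\in\mathcal D$. For $\mathcal D$-almost all $s$ let $\mathfrak L_s\subseteq\mathfrak F_s^{alg}$ be an Artin–Schreier extension of $\mathfrak F_s=\mathbb F_s(t)$, i.e. $\mathfrak L_s=\mathfrak F_s(\alpha_s)$ where $\alpha_s^{p_s}-\alpha_s=a_s$ for some $a_s\in\mathfrak F_s$ and $\alpha_s\notin\mathfrak F_s$. Let $\mathfrak L=\prod_s\mathfrak L_s/\mathcal D$. Then $\mathfrak L\cap\mathbb F^{alg}=\mathbb F$.
   Context: Let $S$ be an infinite set, $\mathcal D$ a nonprincipal ultrafilter on $S$; ultraproducts $\prod_sA_s/\mathcal D$ consist of tuples modulo agreement on a set in $\mathcal D$, classes written $\mathrm{ulim}_sa_s$, componentwise operations. $\mathfrak K=\prod_s\mathbb F_s/\mathcal D$, $\mathbb F=\mathfrak K(t)$, viewed inside $\prod_s\mathfrak F_s/\mathcal D$ via $\sum_i(\mathrm{ulim}_sa_{i,s})t^i\mapsto\mathrm{ulim}_s\sum_ia_{i,s}t^i$. Fix algebraic closures $\mathfrak F_s^{alg}$; $\mathbb F^{alg}$ is the set of elements of $\prod_s\mathfrak F_s^{alg}/\mathcal D$ algebraic over $\mathbb F$. *)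

theory Defs
  imports "HOL-Algebra.Algebraic_Closure" "HOL-Algebra.Finite_Extensions" "HOL-Algebra.Generated_Fields"
          "HOL-Computational_Algebra.Primes"
begin

text \<open>Ultrafilters are modelled as HOL filters on the index type; D-almost-all is
  "eventually P D".  Ultraproduct elements are represented by functions s => x s
  (with x s in the s-th structure for D-almost all s); every predicate below is
  invariant under D-almost-everywhere equality, so it is a predicate on the
  classes ulim x.\<close>

definition nonprincipal_ultrafilter :: "'s filter \<Rightarrow> bool" where
  "nonprincipal_ultrafilter D \<longleftrightarrow>
     D \<noteq> bot \<and> (\<forall>P. eventually P D \<or> eventually (\<lambda>s. \<not> P s) D) \<and>
     (\<forall>s0. \<not> eventually (\<lambda>s. s = s0) D)"

definition ratfield :: "('s \<Rightarrow> 'b ring) \<Rightarrow> ('s \<Rightarrow> 'b set) \<Rightarrow> ('s \<Rightarrow> 'b) \<Rightarrow> 's \<Rightarrow> 'b set" where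
  "ratfield \<Omega> Fq t s = generate_field (\<Omega> s) (insert (t s) (Fq s))"

text \<open>Membership of ulim x in the image of IF = K(t), K = prod F_s / D, under
  sum_i (ulim a_{i,s}) t^i |-> ulim sum_i a_{i,s} t^i (extended to quotients):
  x is D-a.e. a quotient of two polynomials in t_s with coefficients in F_s, of
  uniformly bounded length, whose denominator is D-a.e. nonzero.\<close>
definition in_IF :: "'s filter \<Rightarrow> ('s \<Rightarrow> 'b ring) \<Rightarrow> ('s \<Rightarrow> 'b set) \<Rightarrow> ('s \<Rightarrow> 'b) \<Rightarrow> ('s \<Rightarrow> 'b) \<Rightarrow> bool" where
  "in_IF D \<Omega> Fq t x \<longleftrightarrow>
     (\<exists>N (a :: 's \<Rightarrow> 'b list) (b :: 's \<Rightarrow> 'b list). eventually (\<lambda>s.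
        length (a s) \<le> N \<and> length (b s) \<le> N \<and>
        set (a s) \<subseteq> Fq s \<and> set (b s) \<subseteq> Fq s \<and>
        ring.eval (\<Omega> s) (b s) (t s) \<noteq> \<zero>\<^bsub>\<Omega> s\<^esub> \<and>
        x s = ring.eval (\<Omega> s) (a s) (t s) \<otimes>\<^bsub>\<Omega> s\<^esub> inv\<^bsub>\<Omega> s\<^esub> (ring.eval (\<Omega> s) (b s) (t s))) D)"

text \<open>ulim x lies in prod Omega_s / D and is algebraic over IF: it is a root of a
  polynomial sum_{i\<le>n} c_i X^i with all c_i in IF and c_n \<noteq> 0 in the ultraproduct.\<close>
definition alg_over_IF :: "'s filter \<Rightarrow> ('s \<Rightarrow> 'b ring) \<Rightarrow> ('s \<Rightarrow> 'b set) \<Rightarrow> ('s \<Rightarrow> 'b) \<Rightarrow> ('s \<Rightarrow> 'b) \<Rightarrow> bool" where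
  "alg_over_IF D \<Omega> Fq t x \<longleftrightarrow>
     eventually (\<lambda>s. x s \<in> carrier (\<Omega> s)) D \<and>
     (\<exists>n (c :: nat \<Rightarrow> 's \<Rightarrow> 'b).
        (\<forall>i\<le>n. in_IF D \<Omega> Fq t (c i)) \<and>
        \<not> eventually (\<lambda>s. c n s = \<zero>\<^bsub>\<Omega> s\<^esub>) D \<and>
        eventually (\<lambda>s. (\<Oplus>\<^bsub>\<Omega> s\<^esub> i\<in>{..n}. c i s \<otimes>\<^bsub>\<Omega> s\<^esub> (x s [^]\<^bsub>\<Omega> s\<^esub> i)) = \<zero>\<^bsub>\<Omega> s\<^esub>) D)"

end

theory Submission
  imports Defs
begin

text \<open>
  Let $x$ lie in $\mathfrak L$ and be a root of $\sum_{i \le n} c_i X^i$ with $c_i \in \mathbb F$,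
  $c_n \ne 0$.  Almost every component $c_{i,s}$ is a quotient of polynomials in $t$ over
  $\mathbb F_s$ of degree at most some fixed $N$, and almost every characteristic $p_s$ exceeds $n$.
  The Artin--Schreier extension $\mathfrak L_s / \mathfrak F_s$ has prime degree $p_s$: the roots
  of the minimal polynomial of $\alpha_s$ differ from $\alpha_s$ by elements of $\mathbb F_p$, so if
  it had degree $d < p_s$, comparing its $X^{d-1}$-coefficient would give $d \alpha_s \in
  \mathfrak F_s$.  Hence $x_s$, of degree at most $n < p_s$ over $\mathfrak F_s$, lies in
  $\mathfrak F_s$.  Clearing denominators makes $x_s$ a root of $\sum_i e_i X^i$ with
  $e_i \in \mathbb F_s[t]$ of degree at most $(n + 1) N$; then $e_n x_s$ is integral over the
  integrally closed ring $\mathbb F_s[t]$, hence a polynomial, and comparing degrees in its monic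
  equation bounds its degree by $(n + 1) N$ as well.  This bound, uniform in $s$, puts $x$ in
  $\mathbb F$.
\<close>

section \<open>Arithmetic in characteristic $p$\<close>

lemma (in cring) binomial_ring:
  assumes x: "x \<in> carrier R" and y: "y \<in> carrier R"
  shows "(x \<oplus> y) [^] n = (\<Oplus>k\<in>{..n}. [(n choose k)] \<cdot> (x [^] k \<otimes> y [^] (n - k)))"
proof (induction n)
  case 0
  then show ?case using x y by (simp add: finsum_0)
next
  case (Suc n)
  define T where "T = (\<lambda>m k. [(m choose k)] \<cdot> (x [^] k \<otimes> y [^] (m - k)))"
  have T_closed: "\<And>m k. T m k \<in> carrier R" unfolding T_def using x y by simp
  have IH: "(x \<oplus> y) [^] n = (\<Oplus>k\<in>{..n}. T n k)" using Suc unfolding T_def by simp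
  have "(x \<oplus> y) [^] Suc n = (\<Oplus>k\<in>{..n}. T n k \<otimes> x) \<oplus> (\<Oplus>k\<in>{..n}. T n k \<otimes> y)"
    using IH x y T_closed by (simp add: r_distr finsum_ldistr)
  also have "(\<Oplus>k\<in>{..n}. T n k \<otimes> x) = (\<Oplus>k\<in>{..n}. [(n choose k)] \<cdot> (x [^] Suc k \<otimes> y [^] (n - k)))"
    unfolding T_def using x y
    by (intro finsum_cong') (auto simp: add_pow_ldistr add_pow_rdistr m_ac nat_pow_Suc2)
  also have "(\<Oplus>k\<in>{..n}. T n k \<otimes> y) = (\<Oplus>k\<in>{..n}. [(n choose k)] \<cdot> (x [^] k \<otimes> y [^] (Suc n - k)))"
    unfolding T_def using x y
    by (intro finsum_cong') (auto simp: add_pow_ldistr add_pow_rdistr m_ac nat_pow_Suc2 Suc_diff_le)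
  also have "\<dots> = (\<Oplus>k\<in>{..n}. [(n choose Suc k)] \<cdot> (x [^] Suc k \<otimes> y [^] (n - k))) \<oplus> y [^] Suc n"
  proof -
    have "(\<Oplus>k\<in>{..Suc n}. [(n choose k)] \<cdot> (x [^] k \<otimes> y [^] (Suc n - k)))
        = (\<Oplus>k\<in>{..n}. [(n choose k)] \<cdot> (x [^] k \<otimes> y [^] (Suc n - k)))"
      using x y by (simp add: finsum_Suc binomial_eq_0)
    moreover have "(\<Oplus>k\<in>{..Suc n}. [(n choose k)] \<cdot> (x [^] k \<otimes> y [^] (Suc n - k)))
        = (\<Oplus>k\<in>{..n}. [(n choose Suc k)] \<cdot> (x [^] Suc k \<otimes> y [^] (n - k))) \<oplus> y [^] Suc n"
      using x y by (subst finsum_Suc2) (auto simp del: nat_pow_Suc)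
    ultimately show ?thesis by simp
  qed
  also have "(\<Oplus>k\<in>{..n}. [(n choose k)] \<cdot> (x [^] Suc k \<otimes> y [^] (n - k))) \<oplus>
      ((\<Oplus>k\<in>{..n}. [(n choose Suc k)] \<cdot> (x [^] Suc k \<otimes> y [^] (n - k))) \<oplus> y [^] Suc n)
    = (\<Oplus>k\<in>{..n}. [(Suc n choose Suc k)] \<cdot> (x [^] Suc k \<otimes> y [^] (n - k))) \<oplus> y [^] Suc n"
    using x y by (simp add: finsum_addf[symmetric] add.nat_pow_mult a_assoc[symmetric])
  also have "\<dots> = (\<Oplus>k\<in>{..Suc n}. T (Suc n) k)"
    unfolding T_def using x y by (subst finsum_Suc2) (auto simp del: nat_pow_Suc)
  finally show ?case unfolding T_def .
qed

lemma (in ring) add_pow_char_mult: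
  assumes char: "[(p::nat)] \<cdot> \<one> = \<zero>" and z: "z \<in> carrier R"
  shows "[(p * m)] \<cdot> z = \<zero>"
proof -
  have "[p] \<cdot> z = \<zero>"
    using add_pow_ldistr[of \<one> z p] z char by simp
  moreover have "[(p * m)] \<cdot> z = [m] \<cdot> ([p] \<cdot> z)"
    using z by (simp add: add.nat_pow_pow)
  ultimately show ?thesis by simp
qed

lemma (in cring) frobenius_add:
  assumes p: "prime (p::nat)" and char: "[p] \<cdot> \<one> = \<zero>"
    and x: "x \<in> carrier R" and y: "y \<in> carrier R"
  shows "(x \<oplus> y) [^] p = x [^] p \<oplus> y [^] p"
proof -
  define f where "f = (\<lambda>k. [(p choose k)] \<cdot> (x [^] k \<otimes> y [^] (p - k)))"
  have f_closed: "\<And>k. f k \<in> carrier R" unfolding f_def using x y by simp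
  have f_middle: "f k = \<zero>" if "0 < k" "k < p" for k
  proof -
    have "p dvd (p choose k)" using dvd_choose_prime[of k p] that p by auto
    then obtain m where "p choose k = p * m" by blast
    then show ?thesis unfolding f_def using add_pow_char_mult[OF char] x y by simp
  qed
  obtain j where j: "p = Suc (Suc j)"
    using prime_ge_2_nat[OF p] by (metis add_2_eq_Suc le_Suc_ex)
  have "(x \<oplus> y) [^] p = finsum R f {..Suc (Suc j)}"
    unfolding f_def binomial_ring[OF x y] j ..
  also have "\<dots> = f p \<oplus> finsum R f {..Suc j}"
    using f_closed j by (simp add: finsum_Suc del: nat_pow_Suc)
  also have "finsum R f {..Suc j} = (\<Oplus>k\<in>{..j}. f (Suc k)) \<oplus> f 0"
    using f_closed by (subst finsum_Suc2) auto
  also have "(\<Oplus>k\<in>{..j}. f (Suc k)) = (\<Oplus>k\<in>{..j}. \<zero>)"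
    using f_closed f_middle j by (intro finsum_cong') auto
  finally show ?thesis using x y by (simp add: f_def)
qed


lemma (in ring) add_pow_one_power:
  "([(m::nat)] \<cdot> \<one>) [^] (k::nat) = [(m ^ k)] \<cdot> \<one>"
proof (induction k)
  case (Suc k)
  have "[(m ^ k)] \<cdot> \<one> \<otimes> [m] \<cdot> \<one> = [(m ^ k * m)] \<cdot> \<one>"
    using add_pow_ldistr[of \<one> "[m] \<cdot> \<one>" "m ^ k"] by (simp add: add.nat_pow_pow mult.commute)
  then show ?case using Suc by (simp add: mult.commute)
qed simp

lemma (in ring) add_pow_one_mem_subring:
  assumes "subring K R" shows "[(k::nat)] \<cdot> \<one> \<in> K"
  by (induction k) (simp_all add: subringE(2,3,7)[OF assms])

lemma (in domain) add_pow_one_neq_zero_below_char: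
  assumes p: "prime (p::nat)" and char: "[p] \<cdot> \<one> = \<zero>" and m: "0 < m" "m < p"
  shows "[(m::nat)] \<cdot> \<one> \<noteq> \<zero>"
proof
  assume m_zero: "[m] \<cdot> \<one> = \<zero>"
  have "coprime m p"
    using p m by (metis coprime_commute nat_dvd_not_less prime_imp_coprime_nat)
  then obtain u v where uv: "m * u = p * v + 1"
    using bezout_nat[of m p] m by (auto simp: coprime_iff_gcd_eq_1)
  have "\<one> = [(p * v)] \<cdot> \<one> \<oplus> [(1::nat)] \<cdot> \<one>"
    using add_pow_char_mult[OF char, of \<one> v] by simp
  also have "\<dots> = [(m * u)] \<cdot> \<one>"
    unfolding uv by (simp add: add.nat_pow_mult)
  also have "\<dots> = \<zero>"
    using add_pow_char_mult[OF m_zero, of \<one> u] by simp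
  finally show False by simp
qed

lemma (in domain) inj_on_add_pow_one_below_char:
  assumes p: "prime (p::nat)" and char: "[p] \<cdot> \<one> = \<zero>"
  shows "inj_on (\<lambda>k::nat. [k] \<cdot> \<one>) {..<p}"
proof -
  have "i = j" if "i < p" "j < p" "i \<le> j" "[i] \<cdot> \<one> = [j] \<cdot> \<one>" for i j :: nat
  proof -
    have "[j] \<cdot> \<one> = [i] \<cdot> \<one> \<oplus> [(j - i)] \<cdot> \<one>"
      using that(3) by (simp add: add.nat_pow_mult)
    then have "[i] \<cdot> \<one> \<oplus> [(j - i)] \<cdot> \<one> = [i] \<cdot> \<one> \<oplus> \<zero>"
      using that(4) by simp
    then have "[(j - i)] \<cdot> \<one> = \<zero>"
      by (metis add.l_cancel add.nat_pow_closed one_closed zero_closed)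
    then show "i = j"
      using add_pow_one_neq_zero_below_char[OF p char, of "j - i"] that by linarith
  qed
  then show ?thesis
    by (intro inj_onI) (metis lessThan_iff nat_le_linear)
qed

lemma (in cring) add_pow_one_pow_char:
  assumes p: "prime (p::nat)" and char: "[p] \<cdot> \<one> = \<zero>"
  shows "([(k::nat)] \<cdot> \<one>) [^] p = [k] \<cdot> \<one>"
proof (induction k)
  case 0
  then show ?case using prime_gt_0_nat[OF p] by (simp add: nat_pow_zero)
next
  case (Suc k)
  have "([Suc k] \<cdot> \<one>) [^] p = ([k] \<cdot> \<one> \<oplus> \<one>) [^] p" by simp
  also have "\<dots> = ([k] \<cdot> \<one>) [^] p \<oplus> \<one> [^] p"
    by (rule frobenius_add[OF p char]) auto
  finally show ?case using Suc by simp
qed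

lemma (in ring) add_pow_subring:
  assumes "x \<in> F"
  shows "add_pow (R\<lparr>carrier := F\<rparr>) (n::nat) x = [n] \<cdot> x"
  by (induction n) (simp_all add: add_pow_def)

lemma (in domain) char_of_card_subfield:
  assumes F: "subfield F R" and fin: "finite F" and p: "prime (p::nat)"
    and card: "card F = p ^ k" and k: "k \<ge> 1"
  shows "[p] \<cdot> \<one> = \<zero>"
proof -
  let ?F = "R\<lparr>carrier := F\<rparr>"
  have F_ring: "subring F R" using F subfieldE(1) by blast
  have "group (add_monoid ?F)"
    using abelian_group.a_group[OF ring.is_abelian_group[OF subring_is_ring[OF F_ring]]] .
  moreover have one: "\<one> \<in> F" using subringE(3)[OF F_ring] .
  ultimately have "\<one> [^]\<^bsub>add_monoid ?F\<^esub> order (add_monoid ?F) = \<one>\<^bsub>add_monoid ?F\<^esub>"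
    using group.pow_order_eq_1 fin by fastforce
  moreover have "order (add_monoid ?F) = p ^ k" using card by (simp add: order_def)
  ultimately have "[(p ^ k)] \<cdot> \<one> = \<zero>"
    using add_pow_subring[OF one] by (simp add: add_pow_def)
  then have "([p] \<cdot> \<one>) [^] k = \<zero>" using add_pow_one_power by simp
  moreover have "([p] \<cdot> \<one>) [^] (n::nat) \<noteq> \<zero>" if "[p] \<cdot> \<one> \<noteq> \<zero>" for n
    using that by (induction n) (auto simp: integral_iff)
  ultimately show ?thesis by blast
qed

section \<open>Artin--Schreier extensions\<close>

lemma (in domain) artin_schreier_poly:
  assumes K: "subring K R" and a: "a \<in> K" and p: "2 \<le> (p::nat)"
  obtains g where "g \<in> carrier (K[X])" "degree g = p"
    "\<And>y. y \<in> carrier R \<Longrightarrow> eval g y = y [^] p \<ominus> y \<ominus> a"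
proof -
  let ?X = "[\<one>, \<zero>]"
  interpret KX: domain "K[X]" using univ_poly_is_domain[OF K] .
  have X: "?X \<in> carrier (K[X])"
    using subringE(2,3)[OF K] by (simp add: univ_poly_carrier[symmetric] polynomial_def)
  have C: "poly_of_const a \<in> carrier (K[X])"
    unfolding univ_poly_carrier[symmetric] poly_of_const_def
    using a normalize_gives_polynomial[of "[a]" K] by simp
  define h where "h = \<ominus>\<^bsub>K[X]\<^esub> ?X \<ominus>\<^bsub>K[X]\<^esub> poly_of_const a"
  define g where "g = ?X [^]\<^bsub>K[X]\<^esub> p \<oplus>\<^bsub>K[X]\<^esub> h"
  have h: "h \<in> carrier (K[X])" unfolding h_def using X C by simp
  have Xp: "?X [^]\<^bsub>K[X]\<^esub> p \<in> carrier (K[X])" using X by simp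
  have g: "g \<in> carrier (K[X])" unfolding g_def using Xp h by simp
  have "degree h \<le> max (degree (\<ominus>\<^bsub>K[X]\<^esub> ?X)) (degree (\<ominus>\<^bsub>K[X]\<^esub> poly_of_const a))"
    unfolding h_def a_minus_def univ_poly_add by (rule poly_add_degree)
  then have "degree h \<le> 1"
    using univ_poly_a_inv_degree[OF K X] univ_poly_a_inv_degree[OF K C]
    by (simp add: poly_of_const_def)
  moreover have "degree (?X [^]\<^bsub>K[X]\<^esub> p) = p"
    using subring_polynomial_pow_degree[OF K X, of p] by simp
  ultimately have "degree g = p"
    unfolding g_def univ_poly_add using K p Xp h
    by (subst poly_add_degree_eq[of K]) (auto simp: univ_poly_carrier[symmetric])
  moreover have "eval g y = y [^] p \<ominus> y \<ominus> a" if y: "y \<in> carrier R" for y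
  proof -
    interpret ev: ring_hom_cring "K[X]" R "\<lambda>q. eval q y"
      using eval_cring_hom[OF K y] .
    have "a \<in> carrier R" using a subringE(1)[OF K] by blast
    then show ?thesis
      unfolding g_def h_def a_minus_def
      using X C y ev.ring.hom_nat_pow[OF X, of p]
      by (simp add: poly_of_const_def a_assoc)
  qed
  ultimately show thesis using that g by blast
qed

lemma card_set_mset_le_size: "card (set_mset M) \<le> size M"
  by (induction M) (simp_all add: card_insert_if)

lemma (in field) card_roots_le_degree:
  assumes q: "q \<in> carrier (poly_ring R)" "q \<noteq> []" and S: "finite S" "S \<subseteq> carrier R"
    and roots: "\<And>s. s \<in> S \<Longrightarrow> eval q s = \<zero>"
  shows "card S \<le> degree q"
proof -
  have "S \<subseteq> set_mset (roots q)"
    using roots_mem_iff_is_root[OF q(1)] q S roots by (auto simp: is_root_def)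
  then have "card S \<le> card (set_mset (roots q))" by (simp add: card_mono)
  also have "\<dots> \<le> degree q"
    using card_set_mset_le_size size_roots_le_degree[OF q(1)] by (rule le_trans)
  finally show ?thesis .
qed

text \<open>The elements $[k] \cdot 1$, $k < p$, form the prime field and are $p$ distinct roots of
  $X^p - X$, hence all of them.\<close>

lemma (in field) pow_char_eq_self_imp_prime_field:
  assumes p: "prime (p::nat)" and char: "[p] \<cdot> \<one> = \<zero>"
    and u: "u \<in> carrier R" and u_fixed: "u [^] p = u"
  shows "u \<in> (\<lambda>k::nat. [k] \<cdot> \<one>) ` {..<p}"
proof (rule ccontr)
  assume u_new: "u \<notin> (\<lambda>k::nat. [k] \<cdot> \<one>) ` {..<p}"
  obtain g where g: "g \<in> carrier (poly_ring R)" "degree g = p"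
    and eval_g: "\<And>y. y \<in> carrier R \<Longrightarrow> eval g y = y [^] p \<ominus> y \<ominus> \<zero>"
    using artin_schreier_poly[OF carrier_is_subring zero_closed prime_ge_2_nat[OF p]] by blast
  define S where "S = insert u ((\<lambda>k::nat. [k] \<cdot> \<one>) ` {..<p})"
  have "card S = Suc p"
    unfolding S_def using u_new card_image[OF inj_on_add_pow_one_below_char[OF p char]] by simp
  moreover have "card S \<le> degree g"
  proof (rule card_roots_le_degree[OF g(1)])
    show "g \<noteq> []" using g(2) prime_ge_2_nat[OF p] by auto
    show "finite S" "S \<subseteq> carrier R" unfolding S_def using u by auto
    show "eval g s = \<zero>" if "s \<in> S" for s
      using that u u_fixed eval_g add_pow_one_pow_char[OF p char]
      unfolding S_def by (auto simp: a_minus_def r_neg)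
  qed
  ultimately show False using g(2) by simp
qed

lemma (in field) artin_schreier_roots_differ_by_prime_field:
  assumes p: "prime (p::nat)" and char: "[p] \<cdot> \<one> = \<zero>"
    and r: "r \<in> carrier R" and \<alpha>: "\<alpha> \<in> carrier R"
    and same: "r [^] p \<ominus> r = \<alpha> [^] p \<ominus> \<alpha>"
  shows "r \<ominus> \<alpha> \<in> (\<lambda>k::nat. [k] \<cdot> \<one>) ` {..<p}"
proof (rule pow_char_eq_self_imp_prime_field[OF p char])
  define u where "u = r \<ominus> \<alpha>"
  have u: "u \<in> carrier R" unfolding u_def using r \<alpha> by simp
  have r_eq: "r = u \<oplus> \<alpha>" unfolding u_def using r \<alpha> by (simp add: a_minus_def a_assoc l_neg)
  have "r [^] p \<ominus> r = (u [^] p \<ominus> u) \<oplus> (\<alpha> [^] p \<ominus> \<alpha>)"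
    unfolding r_eq frobenius_add[OF p char u \<alpha>] using u \<alpha> by (simp add: a_minus_def minus_add a_ac)
  then have "(u [^] p \<ominus> u) \<oplus> (\<alpha> [^] p \<ominus> \<alpha>) = \<zero> \<oplus> (\<alpha> [^] p \<ominus> \<alpha>)"
    using same \<alpha> by simp
  then have "u [^] p \<ominus> u = \<zero>"
    using u \<alpha> by (metis add.right_cancel minus_closed nat_pow_closed zero_closed)
  then show "u [^] p = u" using u by (simp add: r_right_minus_eq)
  show "r \<ominus> \<alpha> \<in> carrier R" using r \<alpha> by simp
qed

lemma (in field) coeff_linear_factor_mult:
  assumes a: "a \<in> carrier R" and q: "set q \<subseteq> carrier R"
  shows "coeff (poly_mult [\<one>, \<ominus> a] q) 0 = \<ominus> a \<otimes> coeff q 0"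
    and "coeff (poly_mult [\<one>, \<ominus> a] q) (Suc j) = coeff q j \<ominus> a \<otimes> coeff q (Suc j)"
proof -
  have lin: "set [\<one>, \<ominus> a] \<subseteq> carrier R" using a by auto
  show "coeff (poly_mult [\<one>, \<ominus> a] q) 0 = \<ominus> a \<otimes> coeff q 0"
    using poly_mult_coeff[OF lin q] a q by (simp add: finsum_0)
  let ?f = "\<lambda>k. coeff [\<one>, \<ominus> a] k \<otimes> coeff q (Suc j - k)"
  have f_closed: "?f \<in> {..Suc j} \<rightarrow> carrier R" using a q by (auto intro!: coeff_in_carrier)
  have "coeff (poly_mult [\<one>, \<ominus> a] q) (Suc j) = finsum R ?f {..Suc j}"
    using poly_mult_coeff[OF lin q] by simp
  also have "\<dots> = (\<Oplus>k\<in>{..j}. ?f (Suc k)) \<oplus> ?f 0"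
    using f_closed by (subst finsum_Suc2) auto
  also have "(\<Oplus>k\<in>{..j}. ?f (Suc k)) = coeff q j"
  proof (cases j)
    case 0
    then show ?thesis using a q by (simp add: finsum_0)
  next
    case (Suc j')
    have "(\<Oplus>k\<in>{..j}. ?f (Suc k)) = (\<Oplus>k\<in>{..j'}. \<zero>) \<oplus> ?f (Suc 0)"
      unfolding Suc using a q by (subst finsum_Suc2) (auto intro!: finsum_cong' coeff_in_carrier)
    then show ?thesis using a q Suc by simp
  qed
  finally show "coeff (poly_mult [\<one>, \<ominus> a] q) (Suc j) = coeff q j \<ominus> a \<otimes> coeff q (Suc j)"
    using a q by (simp add: a_minus_def l_minus)
qed

lemma (in field) monic_linear_factor_in_coset:
  assumes AC: "algebraically_closed R"
    and q: "q \<in> carrier (poly_ring R)" "lead_coeff q = \<one>" "degree q = Suc m"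
    and roots: "\<And>r. r \<in> carrier R \<Longrightarrow> eval q r = \<zero> \<Longrightarrow> r \<ominus> \<alpha> \<in> K"
  obtains a c where "a \<in> carrier R" "a \<ominus> \<alpha> \<in> K" "c \<in> carrier (poly_ring R)" "c \<noteq> []"
    "q = poly_mult [\<one>, \<ominus> a] c" "lead_coeff c = \<one>" "degree c = m"
    "\<And>r. r \<in> carrier R \<Longrightarrow> eval c r = \<zero> \<Longrightarrow> r \<ominus> \<alpha> \<in> K"
proof -
  have "size (roots q) = Suc m"
    using algebraically_closed.roots_over_carrier[OF AC q(1)] q(3) unfolding splitted_def by simp
  then obtain a where a: "a \<in> carrier R" and "[\<one>, \<ominus> a] pdivides q"
    using not_empty_rootsE[OF q(1)] by (metis size_empty nat.distinct(1))
  then obtain c where c: "c \<in> carrier (poly_ring R)" and q_eq: "q = poly_mult [\<one>, \<ominus> a] c"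
    unfolding pdivides_def factor_def by (auto simp: univ_poly_mult)
  have c_ne: "c \<noteq> []" using q_eq q(3) by auto
  have lin: "polynomial (carrier R) [\<one>, \<ominus> a]" using a by (simp add: polynomial_def)
  have c_poly: "polynomial (carrier R) c" using c univ_poly_carrier by blast
  have "degree q = 1 + degree c"
    using poly_mult_degree_eq[OF carrier_is_subring lin c_poly] c_ne q_eq by simp
  moreover have "lead_coeff q = \<one> \<otimes> lead_coeff c"
    using poly_mult_lead_coeff[OF carrier_is_subring lin c_poly] c_ne q_eq by simp
  moreover have "lead_coeff c \<in> carrier R" using c_poly c_ne by (cases c) (auto simp: polynomial_def)
  ultimately have "degree c = m" "lead_coeff c = \<one>" using q(2,3) by auto
  have c_set: "set c \<subseteq> carrier R" using c_poly polynomial_incl by blast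
  have eval_q: "eval q r = eval [\<one>, \<ominus> a] r \<otimes> eval c r" if "r \<in> carrier R" for r
    unfolding q_eq by (rule eval_poly_mult[OF _ c_set that]) (use a in auto)
  have "eval q a = \<zero>" using eval_q[OF a] a c_set by (simp add: eval_in_carrier r_neg)
  then have "a \<ominus> \<alpha> \<in> K" using roots a by blast
  moreover have "r \<ominus> \<alpha> \<in> K" if "r \<in> carrier R" "eval c r = \<zero>" for r
    using roots[of r] eval_q[of r] that a by (simp add: eval_in_carrier)
  ultimately show thesis
    using that a c c_ne q_eq \<open>degree c = m\<close> \<open>lead_coeff c = \<one>\<close> by blast
qed

text \<open>Vieta's formula for the subleading coefficient, splitting off one root at a time.\<close>

lemma (in field) subleading_coeff_roots_in_coset:
  assumes AC: "algebraically_closed R" and K: "subring K R" and \<alpha>: "\<alpha> \<in> carrier R"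
  shows "q \<in> carrier (poly_ring R) \<Longrightarrow> lead_coeff q = \<one> \<Longrightarrow> degree q = Suc m \<Longrightarrow>
    (\<And>r. r \<in> carrier R \<Longrightarrow> eval q r = \<zero> \<Longrightarrow> r \<ominus> \<alpha> \<in> K) \<Longrightarrow>
    coeff q m \<oplus> [Suc m] \<cdot> \<alpha> \<in> K"
proof (induction m arbitrary: q)
  case (0 q)
  obtain a c where a: "a \<in> carrier R" "a \<ominus> \<alpha> \<in> K" and c: "c \<noteq> []"
    and q_eq: "q = poly_mult [\<one>, \<ominus> a] c" and "lead_coeff c = \<one>" "degree c = 0"
    using monic_linear_factor_in_coset[OF AC "0.prems"] by blast
  then have "c = [\<one>]" by (cases c) auto
  then have "coeff q 0 = \<ominus> a"
    using coeff_linear_factor_mult(1)[OF a(1), of c] q_eq a by simp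
  moreover have "\<ominus> a \<oplus> [Suc 0] \<cdot> \<alpha> = \<ominus> (a \<ominus> \<alpha>)"
    using a \<alpha> by (simp add: a_minus_def minus_add a_comm)
  ultimately show ?case using a K by (simp add: subringE(5))
next
  case (Suc m q)
  obtain a c where a: "a \<in> carrier R" "a \<ominus> \<alpha> \<in> K" and c: "c \<in> carrier (poly_ring R)" "c \<noteq> []"
    and q_eq: "q = poly_mult [\<one>, \<ominus> a] c" and c_monic: "lead_coeff c = \<one>" "degree c = Suc m"
    and c_roots: "\<And>r. r \<in> carrier R \<Longrightarrow> eval c r = \<zero> \<Longrightarrow> r \<ominus> \<alpha> \<in> K"
    using monic_linear_factor_in_coset[OF AC Suc.prems] by blast
  have c_set: "set c \<subseteq> carrier R" using c(1) univ_poly_carrier polynomial_incl by blast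
  have "coeff c (Suc m) = \<one>" using c(2) c_monic lead_coeff_simp[of c] by simp
  then have "coeff q (Suc m) = coeff c m \<ominus> a"
    using coeff_linear_factor_mult(2)[OF a(1) c_set, of m] q_eq a by simp
  then have "coeff q (Suc m) \<oplus> [Suc (Suc m)] \<cdot> \<alpha> = (coeff c m \<oplus> [Suc m] \<cdot> \<alpha>) \<oplus> \<ominus> (a \<ominus> \<alpha>)"
    using a \<alpha> c_set by (simp add: a_minus_def minus_add a_ac)
  moreover have "coeff c m \<oplus> [Suc m] \<cdot> \<alpha> \<in> K"
    using Suc.IH[OF c(1) c_monic c_roots] .
  ultimately show ?case using a K by (simp add: subringE(5,7))
qed

lemma (in ring) coeff_in_subring:
  assumes "subring K R" "set f \<subseteq> K" shows "coeff f i \<in> K"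
  using assms(2) by (induction f) (simp_all add: subringE(2)[OF assms(1)])

lemma (in domain) degree_Irr_pos:
  assumes K: "subfield K R" and x: "x \<in> carrier R" and alg: "(algebraic over K) x"
  shows "0 < degree (Irr K x)"
proof (rule ccontr)
  assume "\<not> 0 < degree (Irr K x)"
  moreover have "Irr K x \<noteq> []"
    using pirreducibleE(1)[OF subfieldE(1)[OF K] IrrE(1,2)[OF K x alg]] .
  ultimately have "Irr K x = [\<one>]" using IrrE(3)[OF K x alg] by (cases "Irr K x") auto
  then show False using IrrE(4)[OF K x alg] by simp
qed

lemma (in field) mem_subfield_of_add_pow_mem:
  assumes K: "subfield K R" and p: "prime (p::nat)" and char: "[p] \<cdot> \<one> = \<zero>"
    and n: "\<not> p dvd n" and \<alpha>: "\<alpha> \<in> carrier R" and n\<alpha>: "[n] \<cdot> \<alpha> \<in> K"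
  shows "\<alpha> \<in> K"
proof -
  have K_ring: "subring K R" using K subfieldE(1) by blast
  have "[n] \<cdot> \<one> = [(p * (n div p))] \<cdot> \<one> \<oplus> [(n mod p)] \<cdot> \<one>"
    using add.nat_pow_mult[of \<one> "p * (n div p)" "n mod p"] by simp
  then have "[n] \<cdot> \<one> = [(n mod p)] \<cdot> \<one>" using add_pow_char_mult[OF char] by simp
  moreover have "0 < n mod p" "n mod p < p"
    using n prime_gt_0_nat[OF p] by (auto simp: dvd_eq_mod_eq_0)
  ultimately have n_unit: "[n] \<cdot> \<one> \<in> K - {\<zero>}"
    using add_pow_one_neq_zero_below_char[OF p char] add_pow_one_mem_subring[OF K_ring] by simp
  have "[n] \<cdot> \<one> \<in> Units R" using n_unit field_Units by simp
  then have "\<alpha> = inv ([n] \<cdot> \<one>) \<otimes> ([n] \<cdot> \<one> \<otimes> \<alpha>)"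
    using \<alpha> by (simp add: m_assoc[symmetric])
  also have "[n] \<cdot> \<one> \<otimes> \<alpha> = [n] \<cdot> \<alpha>" using add_pow_ldistr[of \<one> \<alpha>] \<alpha> by simp
  finally have \<alpha>_eq: "\<alpha> = inv ([n] \<cdot> \<one>) \<otimes> [n] \<cdot> \<alpha>" .
  have "inv ([n] \<cdot> \<one>) \<otimes> [n] \<cdot> \<alpha> \<in> K"
    using subfield_m_inv(1)[OF K n_unit] n\<alpha> subringE(6)[OF K_ring] by blast
  then show ?thesis unfolding \<alpha>_eq[symmetric] .
qed

lemma (in field) artin_schreier_Irr:
  assumes K: "subfield K R" and p: "prime (p::nat)" and char: "[p] \<cdot> \<one> = \<zero>"
    and \<alpha>: "\<alpha> \<in> carrier R" "\<alpha> [^] p \<ominus> \<alpha> \<in> K"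
  shows "(algebraic over K) \<alpha>" and "degree (Irr K \<alpha>) \<le> p"
    and "\<And>r. r \<in> carrier R \<Longrightarrow> eval (Irr K \<alpha>) r = \<zero> \<Longrightarrow> r \<ominus> \<alpha> \<in> K"
proof -
  have K_ring: "subring K R" using K subfieldE(1) by blast
  obtain g where g: "g \<in> carrier (K[X])" "degree g = p"
    and eval_g: "\<And>y. y \<in> carrier R \<Longrightarrow> eval g y = y [^] p \<ominus> y \<ominus> (\<alpha> [^] p \<ominus> \<alpha>)"
    using artin_schreier_poly[OF K_ring \<alpha>(2) prime_ge_2_nat[OF p]] by blast
  have g_ne: "g \<noteq> []" using g(2) prime_ge_2_nat[OF p] by auto
  have "eval g \<alpha> = \<zero>" using eval_g[OF \<alpha>(1)] \<alpha>(1) by (simp add: a_minus_def r_neg)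
  then show alg: "(algebraic over K) \<alpha>" using algebraicI[OF g(1) g_ne] by blast
  have f: "Irr K \<alpha> \<in> carrier (K[X])" using IrrE(1)[OF K \<alpha>(1) alg] .
  have f_dvd_g: "Irr K \<alpha> pdivides g" using Irr_minimal[OF K \<alpha>(1) alg g(1)] \<open>eval g \<alpha> = \<zero>\<close> .
  show "degree (Irr K \<alpha>) \<le> p" using pdivides_imp_degree_le[OF K_ring f g(1) g_ne f_dvd_g] g(2) by simp
  fix r assume r: "r \<in> carrier R" "eval (Irr K \<alpha>) r = \<zero>"
  have "Irr K \<alpha> \<in> carrier (poly_ring R)"
    using f carrier_polynomial[OF K_ring] univ_poly_carrier by blast
  then have "eval g r = \<zero>" using pdivides_imp_root_sharing[OF _ f_dvd_g r(1) r(2)] by blast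
  then have "r [^] p \<ominus> r = \<alpha> [^] p \<ominus> \<alpha>" using eval_g[OF r(1)] r(1) \<alpha>(1) by (simp add: r_right_minus_eq)
  then show "r \<ominus> \<alpha> \<in> K"
    using artin_schreier_roots_differ_by_prime_field[OF p char r(1) \<alpha>(1)] add_pow_one_mem_subring[OF K_ring]
    by auto
qed

text \<open>If $d = [K(\alpha) : K]$, the roots of the minimal polynomial are $\alpha + k$ with $k$ in the
  prime field, so Vieta gives $d \alpha \in K$, which forces $p \mid d$.\<close>

lemma (in field) artin_schreier_degree:
  assumes AC: "algebraically_closed R" and K: "subfield K R"
    and p: "prime (p::nat)" and char: "[p] \<cdot> \<one> = \<zero>"
    and \<alpha>: "\<alpha> \<in> carrier R" "\<alpha> \<notin> K" "\<alpha> [^] p \<ominus> \<alpha> \<in> K"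
  shows "(algebraic over K) \<alpha>" and "degree (Irr K \<alpha>) = p"
proof -
  have K_ring: "subring K R" using K subfieldE(1) by blast
  show alg: "(algebraic over K) \<alpha>" using artin_schreier_Irr(1)[OF K p char \<alpha>(1,3)] .
  define f where "f = Irr K \<alpha>"
  have f: "f \<in> carrier (K[X])" "lead_coeff f = \<one>" "0 < degree f"
    using IrrE[OF K \<alpha>(1) alg] degree_Irr_pos[OF K \<alpha>(1) alg] unfolding f_def by auto
  have f_set: "set f \<subseteq> K" using f(1) univ_poly_carrier polynomial_incl by blast
  have f_R: "f \<in> carrier (poly_ring R)"
    using f(1) carrier_polynomial[OF K_ring] univ_poly_carrier by blast
  obtain m where m: "degree f = Suc m" using f(3) gr0_implies_Suc by blast
  have "coeff f m \<oplus> [Suc m] \<cdot> \<alpha> \<in> K"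
    using subleading_coeff_roots_in_coset[OF AC K_ring \<alpha>(1) f_R f(2) m]
      artin_schreier_Irr(3)[OF K p char \<alpha>(1,3)] unfolding f_def by blast
  moreover have "coeff f m \<in> K" using coeff_in_subring[OF K_ring f_set] .
  ultimately have "\<ominus> coeff f m \<oplus> (coeff f m \<oplus> [Suc m] \<cdot> \<alpha>) \<in> K"
    using subringE(5,7)[OF K_ring] by blast
  moreover have "\<ominus> coeff f m \<oplus> (coeff f m \<oplus> [Suc m] \<cdot> \<alpha>) = [degree f] \<cdot> \<alpha>"
    using m f_set \<alpha>(1) subringE(1)[OF K_ring] by (simp add: a_assoc[symmetric] l_neg)
  ultimately have "[degree f] \<cdot> \<alpha> \<in> K" by simp
  then have "p dvd degree f" using mem_subfield_of_add_pow_mem[OF K p char _ \<alpha>(1)] \<alpha>(2) by blast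
  then show "degree (Irr K \<alpha>) = p"
    using artin_schreier_Irr(2)[OF K p char \<alpha>(1,3)] f(3) unfolding f_def by (simp add: dvd_imp_le le_antisym)
qed

lemma (in domain) simple_extension_over_intermediate:
  assumes K: "subring K R" and E: "subring E R" and \<alpha>: "\<alpha> \<in> carrier R"
    and KE: "K \<subseteq> E" and E_sub: "E \<subseteq> simple_extension K \<alpha>"
  shows "simple_extension E \<alpha> = simple_extension K \<alpha>"
proof
  show "simple_extension E \<alpha> \<subseteq> simple_extension K \<alpha>"
    unfolding simple_extension_minimal[OF E \<alpha>]
    using simple_extension_is_subring[OF K \<alpha>] simple_extension_mem[OF K \<alpha>] E_sub by blast
  show "simple_extension K \<alpha> \<subseteq> simple_extension E \<alpha>"
    unfolding simple_extension_minimal[OF K \<alpha>]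
    using simple_extension_is_subring[OF E \<alpha>] simple_extension_mem[OF E \<alpha>]
      simple_extension_incl[OF subringE(1)[OF E] \<alpha>] KE by blast
qed

lemma (in ring) eval_coeff_list:
  assumes c: "\<And>i. i < m \<Longrightarrow> c i \<in> carrier R" and x: "x \<in> carrier R"
  shows "eval (map c (rev [0..<m])) x = (\<Oplus>i\<in>{..<m}. c i \<otimes> x [^] i)"
  using c
proof (induction m)
  case (Suc m)
  then show ?case
    unfolding lessThan_Suc using x by (subst finsum_insert) auto
qed simp

lemma (in domain) degree_Irr_le:
  assumes K: "subfield K R" and x: "x \<in> carrier R"
    and P: "P \<in> carrier (K[X])" "P \<noteq> []" "eval P x = \<zero>"
  shows "(algebraic over K) x" and "degree (Irr K x) \<le> degree P"
proof -
  show alg: "(algebraic over K) x" using algebraicI[OF P] .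
  show "degree (Irr K x) \<le> degree P"
    using pdivides_imp_degree_le[OF subfieldE(1)[OF K] IrrE(1)[OF K x alg] P(1,2)]
      Irr_minimal[OF K x alg P(1,3)] .
qed

lemma (in domain) degree_Irr_one_imp_mem:
  assumes K: "subfield K R" and x: "x \<in> carrier R" and alg: "(algebraic over K) x"
    and deg: "degree (Irr K x) = 1"
  shows "x \<in> K"
proof -
  have K_ring: "subring K R" using K subfieldE(1) by blast
  obtain b where Irr_eq: "Irr K x = [\<one>, b]"
    using deg IrrE(3)[OF K x alg] by (cases "Irr K x" rule: list.exhaust) (auto simp: length_Suc_conv)
  have "set (Irr K x) \<subseteq> K"
    using IrrE(1)[OF K x alg] univ_poly_carrier polynomial_incl by blast
  then have b: "b \<in> K" "b \<in> carrier R" using Irr_eq subringE(1)[OF K_ring] by auto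
  have "x \<oplus> b = \<zero>" using IrrE(4)[OF K x alg] Irr_eq x b by simp
  then have "x = \<ominus> b" using x b by (metis add.inv_equality a_comm)
  then show ?thesis using b subringE(5)[OF K_ring] by simp
qed

lemma (in field) degree_Irr_dvd_of_mem_simple_extension:
  assumes K: "subfield K R" and \<alpha>: "\<alpha> \<in> carrier R" "(algebraic over K) \<alpha>"
    and x: "x \<in> simple_extension K \<alpha>"
  shows "(algebraic over K) x" and "degree (Irr K x) dvd degree (Irr K \<alpha>)"
proof -
  have K_ring: "subring K R" using K subfieldE(1) by blast
  have K_carrier: "K \<subseteq> carrier R" using subringE(1)[OF K_ring] .
  define L where "L = simple_extension K \<alpha>"
  have L: "subfield L R"
    unfolding L_def using simple_extension_is_subfield[OF K \<alpha>(1)] \<alpha>(2) by simp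
  have x_carrier: "x \<in> carrier R" using x subfieldE(3)[OF L] unfolding L_def by blast
  show alg_x: "(algebraic over K) x" using simple_extesion_mem_imp_algebraic[OF K \<alpha> x] .
  define Kx where "Kx = simple_extension K x"
  have Kx: "subfield Kx R"
    unfolding Kx_def using simple_extension_is_subfield[OF K x_carrier] alg_x by simp
  have K_Kx: "K \<subseteq> Kx" unfolding Kx_def using simple_extension_incl[OF K_carrier x_carrier] .
  have "Kx \<subseteq> L"
    unfolding Kx_def simple_extension_minimal[OF K_ring x_carrier]
    using L subfieldE(1) simple_extension_incl[OF K_carrier \<alpha>(1)] x unfolding L_def by blast
  then have L_eq: "simple_extension Kx \<alpha> = L"
    unfolding L_def using simple_extension_over_intermediate[OF K_ring subfieldE(1)[OF Kx] \<alpha>(1) K_Kx]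
    by blast
  have "(dim over K) L = (dim over K) Kx * (dim over Kx) L"
  proof (rule telescopic_base_dim(2)[OF K Kx])
    show "finite_dimension K Kx"
      unfolding Kx_def using finite_dimension_simple_extension[OF K x_carrier] alg_x by simp
    show "finite_dimension Kx L"
      unfolding L_eq[symmetric] using finite_dimension_simple_extension[OF Kx \<alpha>(1)]
        algebraic_mono[OF K_Kx \<alpha>(2)] by simp
  qed
  then show "degree (Irr K x) dvd degree (Irr K \<alpha>)"
    unfolding L_def Kx_def simple_extension_dim[OF K \<alpha>] simple_extension_dim[OF K x_carrier alg_x]
    by simp
qed

lemma (in field) artin_schreier_low_degree_mem_base:
  assumes AC: "algebraically_closed R" and K: "subfield K R"
    and p: "prime (p::nat)" and char: "[p] \<cdot> \<one> = \<zero>"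
    and \<alpha>: "\<alpha> \<in> carrier R" "\<alpha> \<notin> K" "\<alpha> [^] p \<ominus> \<alpha> \<in> K"
    and x: "x \<in> generate_field R (insert \<alpha> K)"
    and c: "\<And>i. i \<le> n \<Longrightarrow> c i \<in> K" "c n \<noteq> \<zero>" "(\<Oplus>i\<in>{..n}. c i \<otimes> x [^] i) = \<zero>"
    and n: "n < p"
  shows "x \<in> K"
proof -
  have K_ring: "subring K R" using K subfieldE(1) by blast
  have K_carrier: "K \<subseteq> carrier R" using subringE(1)[OF K_ring] .
  note alg_\<alpha> = artin_schreier_degree(1)[OF AC K p char \<alpha>]
  have "generate_field R (insert \<alpha> K) \<subseteq> simple_extension K \<alpha>"
    using generate_field_min_subfield1 simple_extension_is_subfield[OF K \<alpha>(1)] alg_\<alpha>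
      simple_extension_incl[OF K_carrier \<alpha>(1)] simple_extension_mem[OF K_ring \<alpha>(1)] K_carrier \<alpha>(1)
    by auto
  then have x_L: "x \<in> simple_extension K \<alpha>" using x by blast
  note alg_x = degree_Irr_dvd_of_mem_simple_extension(1)[OF K \<alpha>(1) alg_\<alpha> x_L]
  have x_carrier: "x \<in> carrier R" using simple_extension_in_carrier[OF K_carrier \<alpha>(1)] x_L by blast
  define P where "P = map c (rev [0..<Suc n])"
  have P: "P \<in> carrier (K[X])" "P \<noteq> []" "degree P = n"
    unfolding P_def univ_poly_carrier[symmetric] polynomial_def using c(1,2)
    by (auto simp: upt_conv_Cons)
  have "eval P x = (\<Oplus>i\<in>{..<Suc n}. c i \<otimes> x [^] i)"
    unfolding P_def using c(1) K_carrier by (intro eval_coeff_list[OF _ x_carrier]) auto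
  then have "eval P x = \<zero>" using c(3) by (simp add: lessThan_Suc_atMost)
  then have "degree (Irr K x) < p" using degree_Irr_le(2)[OF K x_carrier P(1,2)] P(3) n by simp
  moreover have "degree (Irr K x) dvd p"
    using degree_Irr_dvd_of_mem_simple_extension(2)[OF K \<alpha>(1) alg_\<alpha> x_L]
      artin_schreier_degree(2)[OF AC K p char \<alpha>] by simp
  ultimately have "degree (Irr K x) = 1"
    using p degree_Irr_pos[OF K x_carrier alg_x] by (metis prime_nat_iff nat_dvd_not_less)
  then show ?thesis using degree_Irr_one_imp_mem[OF K x_carrier alg_x] by blast
qed

section \<open>Rational functions in a transcendental element\<close>

text \<open>The condition imposed on each component by \<^const>\<open>in_IF\<close>.\<close>

definition (in ring) bounded_fraction :: "nat \<Rightarrow> 'a set \<Rightarrow> 'a \<Rightarrow> 'a \<Rightarrow> bool" where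
  "bounded_fraction N K u y \<longleftrightarrow> (\<exists>a b. length a \<le> N \<and> length b \<le> N \<and> set a \<subseteq> K \<and> set b \<subseteq> K \<and>
     eval b u \<noteq> \<zero> \<and> y = eval a u \<otimes> inv (eval b u))"

lemma (in field) bounded_fraction_closed:
  assumes "K \<subseteq> carrier R" "u \<in> carrier R" "bounded_fraction N K u y" shows "y \<in> carrier R"
proof -
  obtain a b where "set a \<subseteq> K" "set b \<subseteq> K" "eval b u \<noteq> \<zero>" "y = eval a u \<otimes> inv (eval b u)"
    using assms(3) unfolding bounded_fraction_def by blast
  moreover have "eval a u \<in> carrier R" "eval b u \<in> carrier R"
    using calculation(1,2) assms(1,2) by (auto intro!: eval_in_carrier)
  ultimately show ?thesis using field_Units by simp
qed

lemma (in domain) finprod_neq_zero: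
  assumes "finite I" "\<And>i. i \<in> I \<Longrightarrow> g i \<in> carrier R" "\<And>i. i \<in> I \<Longrightarrow> g i \<noteq> \<zero>"
  shows "finprod R g I \<noteq> \<zero>"
  using assms by (induction I rule: finite_induct) (auto simp: integral_iff)

lemma (in cring) leading_coeff_times_root:
  fixes n :: nat
  assumes x: "x \<in> carrier R" and e: "\<And>i. i \<le> n \<Longrightarrow> e i \<in> carrier R"
    and root: "(\<Oplus>i\<in>{..n}. e i \<otimes> x [^] i) = \<zero>" and n: "0 < n"
  shows "(e n \<otimes> x) [^] n \<oplus> (\<Oplus>i\<in>{..<n}. (e i \<otimes> e n [^] (n - 1 - i)) \<otimes> (e n \<otimes> x) [^] i) = \<zero>"
proof -
  define c where "c = e n"
  have c: "c \<in> carrier R" unfolding c_def using e by simp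
  have e_closed: "\<And>i. i < n \<Longrightarrow> e i \<in> carrier R" using e by simp
  define S where "S = (\<Oplus>i\<in>{..<n}. e i \<otimes> x [^] i)"
  have S: "S \<in> carrier R" unfolding S_def using e_closed x by (intro finsum_closed) auto
  have "c \<otimes> x [^] n \<oplus> S = \<zero>"
    using root e x unfolding S_def c_def atMost_Suc lessThan_Suc_atMost[symmetric] lessThan_Suc
    by (subst (asm) finsum_insert) auto
  then have "c [^] (n - 1) \<otimes> (c \<otimes> x [^] n) \<oplus> c [^] (n - 1) \<otimes> S = \<zero>"
    using c x S by (metis nat_pow_closed m_closed r_distr r_null)
  moreover have "c [^] (n - 1) \<otimes> (c \<otimes> x [^] n) = (c \<otimes> x) [^] n"
    using c x n by (simp add: nat_pow_distrib m_assoc[symmetric] flip: nat_pow_Suc)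
  moreover have "c [^] (n - 1) \<otimes> S = (\<Oplus>i\<in>{..<n}. (e i \<otimes> c [^] (n - 1 - i)) \<otimes> (c \<otimes> x) [^] i)"
    unfolding S_def
  proof (subst finsum_rdistr, rule finite_lessThan)
    show "(\<Oplus>i\<in>{..<n}. c [^] (n - 1) \<otimes> (e i \<otimes> x [^] i))
        = (\<Oplus>i\<in>{..<n}. (e i \<otimes> c [^] (n - 1 - i)) \<otimes> (c \<otimes> x) [^] i)"
    proof (rule finsum_cong')
      fix i assume i: "i \<in> {..<n}"
      then have "c [^] (n - 1) = c [^] (n - 1 - i) \<otimes> c [^] i"
        using c by (simp add: nat_pow_mult)
      then show "c [^] (n - 1) \<otimes> (e i \<otimes> x [^] i) = (e i \<otimes> c [^] (n - 1 - i)) \<otimes> (c \<otimes> x) [^] i"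
        using i c x e_closed[of i] by (simp add: nat_pow_distrib m_ac)
    qed (use e_closed c x in auto)
  qed (use e_closed c x in auto)
  ultimately show ?thesis unfolding c_def by simp
qed

lemma (in cring) integral_equation_times_power:
  fixes n :: nat
  assumes z: "z \<in> carrier R" and b: "b \<in> carrier R" and f: "\<And>i. i < n \<Longrightarrow> f i \<in> carrier R"
    and n: "0 < n" and root: "z [^] n \<oplus> (\<Oplus>i\<in>{..<n}. f i \<otimes> z [^] i) = \<zero>"
  shows "(b \<otimes> z) [^] (n - 1) \<otimes> z = \<ominus> (\<Oplus>i\<in>{..<n}. f i \<otimes> (b \<otimes> z) [^] i \<otimes> b [^] (n - 1 - i))"
proof -
  define S where "S = (\<Oplus>i\<in>{..<n}. f i \<otimes> z [^] i)"
  have S: "S \<in> carrier R" unfolding S_def using f z by (intro finsum_closed) auto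
  have "z [^] n = \<ominus> S"
    using add.inv_equality[of "z [^] n" S] root S z unfolding S_def by simp
  have "(b \<otimes> z) [^] (n - 1) \<otimes> z = b [^] (n - 1) \<otimes> z [^] n"
    using b z n by (simp add: nat_pow_distrib m_assoc flip: nat_pow_Suc)
  also have "\<dots> = \<ominus> (b [^] (n - 1) \<otimes> S)"
    using \<open>z [^] n = \<ominus> S\<close> b S by (simp add: r_minus)
  also have "b [^] (n - 1) \<otimes> S = (\<Oplus>i\<in>{..<n}. f i \<otimes> (b \<otimes> z) [^] i \<otimes> b [^] (n - 1 - i))"
    unfolding S_def
  proof (subst finsum_rdistr, rule finite_lessThan)
    show "(\<Oplus>i\<in>{..<n}. b [^] (n - 1) \<otimes> (f i \<otimes> z [^] i))
        = (\<Oplus>i\<in>{..<n}. f i \<otimes> (b \<otimes> z) [^] i \<otimes> b [^] (n - 1 - i))"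
    proof (rule finsum_cong')
      fix i assume i: "i \<in> {..<n}"
      then have "b [^] (n - 1) = b [^] i \<otimes> b [^] (n - 1 - i)"
        using b by (simp add: nat_pow_mult)
      then show "b [^] (n - 1) \<otimes> (f i \<otimes> z [^] i) = f i \<otimes> (b \<otimes> z) [^] i \<otimes> b [^] (n - 1 - i)"
        using i b z f[of i] by (simp add: nat_pow_distrib m_ac)
    qed (use f b z in auto)
  qed (use f b z in auto)
  finally show ?thesis .
qed

locale rational_function_field = field R for R (structure) +
  fixes F and t
  assumes F: "subfield F R" and t: "t \<in> carrier R" and t_transcendental: "(transcendental over F) t"
begin

lemma F_ring: "subring F R"
  using F subfieldE(1) by blast

lemma F_carrier: "F \<subseteq> carrier R"
  using subringE(1)[OF F_ring] .

sublocale eval_t: ring_hom_cring "F[X]" R "\<lambda>P. eval P t"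
  using eval_cring_hom[OF F_ring t] .

lemma eval_t_eq_zero_iff: "P \<in> carrier (F[X]) \<Longrightarrow> eval P t = \<zero> \<longleftrightarrow> P = []"
  using eval_transcendental[OF t_transcendental] by auto

abbreviation Ft :: "'a set" where "Ft \<equiv> simple_extension F t"

lemma mem_Ft_iff: "y \<in> Ft \<longleftrightarrow> (\<exists>P \<in> carrier (F[X]). y = eval P t)"
  unfolding simple_extension_as_eval_img[OF F_carrier t] by blast

lemma Ft_subring: "subring Ft R"
  using simple_extension_is_subring[OF F_ring t] .

lemma poly_mult_neq_nil:
  "P \<in> carrier (F[X]) \<Longrightarrow> Q \<in> carrier (F[X]) \<Longrightarrow> P \<noteq> [] \<Longrightarrow> Q \<noteq> [] \<Longrightarrow> P \<otimes>\<^bsub>F[X]\<^esub> Q \<noteq> []"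
  using domain.integral_iff[OF univ_poly_is_domain[OF F_ring]] by (simp add: univ_poly_zero)

definition is_fraction :: "'a \<Rightarrow> bool" where
  "is_fraction y \<longleftrightarrow> y \<in> carrier R \<and>
     (\<exists>A \<in> carrier (F[X]). \<exists>B \<in> carrier (F[X]). B \<noteq> [] \<and> eval B t \<otimes> y = eval A t)"

lemma is_fractionI:
  "y \<in> carrier R \<Longrightarrow> A \<in> carrier (F[X]) \<Longrightarrow> B \<in> carrier (F[X]) \<Longrightarrow> B \<noteq> [] \<Longrightarrow>
    eval B t \<otimes> y = eval A t \<Longrightarrow> is_fraction y"
  unfolding is_fraction_def by blast

lemma is_fraction_poly: "A \<in> carrier (F[X]) \<Longrightarrow> is_fraction (eval A t)"
  using eval_t.R.one_closed by (intro is_fractionI[of _ A "\<one>\<^bsub>F[X]\<^esub>"]) (auto simp: univ_poly_one)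

lemma is_fraction_add:
  assumes "is_fraction y1" "is_fraction y2" shows "is_fraction (y1 \<oplus> y2)"
proof -
  obtain A1 B1 A2 B2 where AB: "A1 \<in> carrier (F[X])" "B1 \<in> carrier (F[X])" "B1 \<noteq> []"
    "A2 \<in> carrier (F[X])" "B2 \<in> carrier (F[X])" "B2 \<noteq> []"
    and y: "y1 \<in> carrier R" "y2 \<in> carrier R"
    and eq: "eval B1 t \<otimes> y1 = eval A1 t" "eval B2 t \<otimes> y2 = eval A2 t"
    using assms unfolding is_fraction_def by blast
  have "B1 \<otimes>\<^bsub>F[X]\<^esub> B2 \<noteq> []"
    using AB by (simp add: poly_mult_neq_nil)
  moreover have "eval (B1 \<otimes>\<^bsub>F[X]\<^esub> B2) t \<otimes> (y1 \<oplus> y2)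
      = eval (A1 \<otimes>\<^bsub>F[X]\<^esub> B2 \<oplus>\<^bsub>F[X]\<^esub> A2 \<otimes>\<^bsub>F[X]\<^esub> B1) t"
    using AB y eq[symmetric] by (simp add: r_distr m_ac)
  ultimately show ?thesis
    using AB y by (intro is_fractionI[of _ "A1 \<otimes>\<^bsub>F[X]\<^esub> B2 \<oplus>\<^bsub>F[X]\<^esub> A2 \<otimes>\<^bsub>F[X]\<^esub> B1"]) auto
qed

lemma is_fraction_mult:
  assumes "is_fraction y1" "is_fraction y2" shows "is_fraction (y1 \<otimes> y2)"
proof -
  obtain A1 B1 A2 B2 where AB: "A1 \<in> carrier (F[X])" "B1 \<in> carrier (F[X])" "B1 \<noteq> []"
    "A2 \<in> carrier (F[X])" "B2 \<in> carrier (F[X])" "B2 \<noteq> []"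
    and y: "y1 \<in> carrier R" "y2 \<in> carrier R"
    and eq: "eval B1 t \<otimes> y1 = eval A1 t" "eval B2 t \<otimes> y2 = eval A2 t"
    using assms unfolding is_fraction_def by blast
  have "B1 \<otimes>\<^bsub>F[X]\<^esub> B2 \<noteq> []"
    using AB by (simp add: poly_mult_neq_nil)
  moreover have "eval (B1 \<otimes>\<^bsub>F[X]\<^esub> B2) t \<otimes> (y1 \<otimes> y2) = eval (A1 \<otimes>\<^bsub>F[X]\<^esub> A2) t"
    using AB y eq[symmetric] by (simp add: m_ac)
  ultimately show ?thesis
    using AB y by (intro is_fractionI[of _ "A1 \<otimes>\<^bsub>F[X]\<^esub> A2"]) auto
qed

lemma is_fraction_neg:
  assumes "is_fraction y" shows "is_fraction (\<ominus> y)"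
proof -
  obtain A B where AB: "A \<in> carrier (F[X])" "B \<in> carrier (F[X])" "B \<noteq> []"
    and y: "y \<in> carrier R" and eq: "eval B t \<otimes> y = eval A t"
    using assms unfolding is_fraction_def by blast
  have "eval B t \<otimes> \<ominus> y = eval (\<ominus>\<^bsub>F[X]\<^esub> A) t"
    using AB y eq by (simp add: r_minus)
  then show ?thesis
    using AB y by (intro is_fractionI[of _ "\<ominus>\<^bsub>F[X]\<^esub> A"]) auto
qed

lemma is_fraction_inv:
  assumes "is_fraction y" "y \<noteq> \<zero>" shows "is_fraction (inv y)"
proof -
  obtain A B where AB: "A \<in> carrier (F[X])" "B \<in> carrier (F[X])" "B \<noteq> []"
    and y: "y \<in> carrier R" and eq: "eval B t \<otimes> y = eval A t"
    using assms unfolding is_fraction_def by blast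
  have y_unit: "y \<in> Units R" using y assms(2) field_Units by simp
  then have "eval A t \<otimes> inv y = eval B t"
    using AB y by (simp flip: eq add: m_assoc)
  moreover have "A \<noteq> []"
    using AB eq assms(2) y eval_t_eq_zero_iff by (auto simp: integral_iff)
  ultimately show ?thesis
    using AB y_unit by (intro is_fractionI[of _ B A]) auto
qed

lemma generate_field_is_fraction:
  "y \<in> generate_field R (insert t F) \<Longrightarrow> is_fraction y"
proof (induction y rule: generate_field.induct)
  case one
  show ?case using is_fraction_poly[OF eval_t.R.one_closed] by simp
next
  case (incl h)
  show ?case
  proof (cases "h = t")
    case True
    have "[\<one>, \<zero>] \<in> carrier (F[X])"
      using subringE(2,3)[OF F_ring] by (simp add: univ_poly_carrier[symmetric] polynomial_def)
    then show ?thesis using is_fraction_poly[of "[\<one>, \<zero>]"] t True by simp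
  next
    case False
    then have "h \<in> F" using incl by simp
    then have "poly_of_const h \<in> carrier (F[X])" "eval (poly_of_const h) t = h"
      using normalize_gives_polynomial[of "[h]" F] F_carrier
      by (auto simp: univ_poly_carrier[symmetric] poly_of_const_def)
    then show ?thesis using is_fraction_poly by metis
  qed
qed (simp_all add: is_fraction_add is_fraction_mult is_fraction_neg is_fraction_inv)

lemma Ft_eval: "P \<in> carrier (F[X]) \<Longrightarrow> eval P t \<in> Ft"
  using mem_Ft_iff by blast

lemma Ft_carrier: "Ft \<subseteq> carrier R"
  using subringE(1)[OF Ft_subring] .

lemma Ft_add: "a \<in> Ft \<Longrightarrow> b \<in> Ft \<Longrightarrow> a \<oplus> b \<in> Ft"
  and Ft_mult: "a \<in> Ft \<Longrightarrow> b \<in> Ft \<Longrightarrow> a \<otimes> b \<in> Ft"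
  and Ft_neg: "a \<in> Ft \<Longrightarrow> \<ominus> a \<in> Ft"
  using subringE(5-7)[OF Ft_subring] by auto

lemma Ft_pow: "a \<in> Ft \<Longrightarrow> a [^] (n::nat) \<in> Ft"
  by (induction n) (auto intro: Ft_mult Ft_eval[OF eval_t.R.one_closed, simplified])

lemma Ft_finsum: "finite I \<Longrightarrow> (\<And>i. i \<in> I \<Longrightarrow> f i \<in> Ft) \<Longrightarrow> finsum R f I \<in> Ft"
proof (induction I rule: finite_induct)
  case empty
  then show ?case using Ft_eval[of "[]"] by simp
next
  case (insert j I)
  then show ?case using Ft_carrier by (subst finsum_insert) (auto intro: Ft_add)
qed

lemma degree_mult_le:
  "P \<in> carrier (F[X]) \<Longrightarrow> Q \<in> carrier (F[X]) \<Longrightarrow> degree (P \<otimes>\<^bsub>F[X]\<^esub> Q) \<le> degree P + degree Q"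
  using poly_mult_degree_eq[OF F_ring, of P Q] by (simp add: univ_poly_mult univ_poly_carrier[symmetric])

lemma degree_pow:
  "P \<in> carrier (F[X]) \<Longrightarrow> degree (P [^]\<^bsub>F[X]\<^esub> (k::nat)) = k * degree P"
  using subring_polynomial_pow_degree[OF F_ring] .

lemma degree_finsum_le:
  assumes "finite I" "\<And>i. i \<in> I \<Longrightarrow> f i \<in> carrier (F[X])" "\<And>i. i \<in> I \<Longrightarrow> degree (f i) \<le> D"
  shows "degree (finsum (F[X]) f I) \<le> D"
  using assms
proof (induction I rule: finite_induct)
  case (insert j I)
  have "degree (f j \<oplus>\<^bsub>F[X]\<^esub> finsum (F[X]) f I) \<le> max (degree (f j)) (degree (finsum (F[X]) f I))"
    unfolding univ_poly_add by (rule poly_add_degree)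
  moreover have "degree (f j) \<le> D" "degree (finsum (F[X]) f I) \<le> D"
    using insert by simp_all
  ultimately have "degree (f j \<oplus>\<^bsub>F[X]\<^esub> finsum (F[X]) f I) \<le> D" by simp
  then show ?case using insert by (subst eval_t.R.finsum_insert) auto
qed (simp add: univ_poly_zero)

lemma degree_finprod_le:
  assumes "finite I" "\<And>i. i \<in> I \<Longrightarrow> f i \<in> carrier (F[X])" "\<And>i. i \<in> I \<Longrightarrow> degree (f i) \<le> D"
  shows "degree (finprod (F[X]) f I) \<le> card I * D"
  using assms
proof (induction I rule: finite_induct)
  case (insert j I)
  have "degree (f j \<otimes>\<^bsub>F[X]\<^esub> finprod (F[X]) f I) \<le> D + card I * D"
    using degree_mult_le[of "f j" "finprod (F[X]) f I"] insert
    by (fastforce intro: eval_t.R.finprod_closed)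
  then show ?case using insert by (subst eval_t.R.finprod_insert) auto
qed (simp add: univ_poly_one)

text \<open>If $\deg Y > M$, then $Y^n$ would have larger degree than every other term of the equation.\<close>

lemma degree_le_of_monic_root:
  fixes n M :: nat
  assumes Y: "Y \<in> carrier (F[X])"
    and g: "\<And>i. i < n \<Longrightarrow> g i \<in> carrier (F[X])" "\<And>i. i < n \<Longrightarrow> degree (g i) \<le> (n - i) * M"
    and n: "0 < n"
    and root: "eval Y t [^] n \<oplus> (\<Oplus>i\<in>{..<n}. eval (g i) t \<otimes> eval Y t [^] i) = \<zero>"
  shows "degree Y \<le> M"
proof (rule ccontr)
  assume "\<not> degree Y \<le> M"
  then have M: "M < degree Y" by simp
  define S where "S = finsum (F[X]) (\<lambda>i. g i \<otimes>\<^bsub>F[X]\<^esub> Y [^]\<^bsub>F[X]\<^esub> i) {..<n}"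
  have S: "S \<in> carrier (F[X])" unfolding S_def using g Y by (intro eval_t.R.finsum_closed) auto
  have "eval S t = (\<Oplus>i\<in>{..<n}. eval (g i \<otimes>\<^bsub>F[X]\<^esub> Y [^]\<^bsub>F[X]\<^esub> i) t)"
    unfolding S_def using g Y by (subst eval_t.hom_finsum) (auto simp: comp_def)
  also have "\<dots> = (\<Oplus>i\<in>{..<n}. eval (g i) t \<otimes> eval Y t [^] i)"
    using g Y by (intro finsum_cong') (auto simp: eval_t.ring.hom_nat_pow)
  finally have "eval (Y [^]\<^bsub>F[X]\<^esub> n \<oplus>\<^bsub>F[X]\<^esub> S) t = \<zero>"
    using Y S root by (simp add: eval_t.ring.hom_nat_pow)
  moreover have "Y [^]\<^bsub>F[X]\<^esub> n \<oplus>\<^bsub>F[X]\<^esub> S \<in> carrier (F[X])" using Y S by simp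
  ultimately have "Y [^]\<^bsub>F[X]\<^esub> n \<oplus>\<^bsub>F[X]\<^esub> S = \<zero>\<^bsub>F[X]\<^esub>"
    using eval_t_eq_zero_iff by (simp add: univ_poly_zero)
  then have "\<ominus>\<^bsub>F[X]\<^esub> S = Y [^]\<^bsub>F[X]\<^esub> n"
    using eval_t.R.minus_equality Y S by simp
  then have "degree S = n * degree Y"
    using univ_poly_a_inv_degree[OF F_ring S] degree_pow[OF Y] by simp
  moreover have "degree S \<le> n * degree Y - 1"
    unfolding S_def
  proof (rule degree_finsum_le)
    fix i assume i: "i \<in> {..<n}"
    have "degree (g i \<otimes>\<^bsub>F[X]\<^esub> Y [^]\<^bsub>F[X]\<^esub> i) \<le> (n - i) * M + i * degree Y"
      using degree_mult_le[of "g i" "Y [^]\<^bsub>F[X]\<^esub> i"] g[of i] degree_pow[OF Y] Y i by fastforce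
    also have "\<dots> \<le> n * degree Y - 1"
    proof -
      have "(n - i) * M + 1 \<le> (n - i) * (M + 1)" using i by simp
      also have "\<dots> \<le> (n - i) * degree Y" using M by (intro mult_le_mono2) simp
      finally have "(n - i) * M + i * degree Y + 1 \<le> (n - i) * degree Y + i * degree Y" by simp
      also have "\<dots> = n * degree Y"
        using i by (simp only: add_mult_distrib[symmetric] le_add_diff_inverse2 lessThan_iff less_imp_le_nat)
      finally show ?thesis by simp
    qed
    finally show "degree (g i \<otimes>\<^bsub>F[X]\<^esub> Y [^]\<^bsub>F[X]\<^esub> i) \<le> n * degree Y - 1" .
  qed (use g Y in auto)
  moreover have "0 < n * degree Y" using n M by simp
  ultimately show False by linarith
qed

text \<open>The $U \in F[X]$ with $U(t) z \in F[t]$ form an ideal, the conductor of $z$; by Euclidean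
  division a nonzero element of least degree divides all the others.\<close>

lemma conductor_generator:
  assumes z: "is_fraction z"
  obtains B where "B \<in> carrier (F[X])" "B \<noteq> []" "eval B t \<otimes> z \<in> Ft"
    "\<And>U. U \<in> carrier (F[X]) \<Longrightarrow> eval U t \<otimes> z \<in> Ft \<Longrightarrow>
       \<exists>Q \<in> carrier (F[X]). eval U t = eval B t \<otimes> eval Q t"
proof -
  define J where "J = {U \<in> carrier (F[X]). U \<noteq> [] \<and> eval U t \<otimes> z \<in> Ft}"
  obtain A0 B0 where "A0 \<in> carrier (F[X])" "B0 \<in> J"
    using z Ft_eval unfolding is_fraction_def J_def by fastforce
  then obtain B where B: "B \<in> J" and B_least: "\<And>U. U \<in> J \<Longrightarrow> degree B \<le> degree U"
    using ex_has_least_nat[of "\<lambda>U. U \<in> J" B0 degree] by blast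
  have B_carrier: "B \<in> carrier (F[X])" and "B \<noteq> []" using B unfolding J_def by auto
  have z_carrier: "z \<in> carrier R" using z unfolding is_fraction_def by blast
  have "\<exists>Q \<in> carrier (F[X]). eval U t = eval B t \<otimes> eval Q t"
    if U: "U \<in> carrier (F[X])" "eval U t \<otimes> z \<in> Ft" for U
  proof -
    obtain Q r where Qr: "Q \<in> carrier (F[X])" "r \<in> carrier (F[X])"
      "U = (B \<otimes>\<^bsub>F[X]\<^esub> Q) \<oplus>\<^bsub>F[X]\<^esub> r" "r = [] \<or> degree r < degree B"
      using subfield_long_division_theorem_shell[OF F U(1) B_carrier] \<open>B \<noteq> []\<close>
      by (auto simp: univ_poly_zero)
    have "eval U t \<otimes> z = eval Q t \<otimes> (eval B t \<otimes> z) \<oplus> eval r t \<otimes> z"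
      using Qr B_carrier z_carrier by (simp add: l_distr r_distr m_ac)
    then have "eval r t \<otimes> z = \<ominus> (eval Q t \<otimes> (eval B t \<otimes> z)) \<oplus> eval U t \<otimes> z"
      using Qr B_carrier z_carrier U(1) by (simp add: add.inv_solve_left)
    moreover have "eval B t \<otimes> z \<in> Ft" using B unfolding J_def by blast
    ultimately have "eval r t \<otimes> z \<in> Ft"
      using U(2) Ft_eval[OF Qr(1)] by (auto intro: Ft_add Ft_neg Ft_mult)
    then have "r = []" using B_least[of r] Qr(2,4) unfolding J_def by fastforce
    then show ?thesis using Qr B_carrier by auto
  qed
  then show thesis using that B_carrier \<open>B \<noteq> []\<close> B unfolding J_def by blast
qed

text \<open>With $B$ generating the conductor and
  $A = B(t) z \in F[t]$, the integral equation gives $A^{n-1} z \in F[t]$, and whenever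
  $A^{m+1} z \in F[t]$ the conductor property yields $A^m z \in F[t]$.\<close>

lemma integral_fraction_mem_Ft:
  fixes n :: nat
  assumes z: "is_fraction z" and f: "\<And>i. i < n \<Longrightarrow> f i \<in> Ft" and n: "0 < n"
    and root: "z [^] n \<oplus> (\<Oplus>i\<in>{..<n}. f i \<otimes> z [^] i) = \<zero>"
  shows "z \<in> Ft"
proof -
  obtain B where B: "B \<in> carrier (F[X])" "B \<noteq> []" "eval B t \<otimes> z \<in> Ft"
    and B_divides: "\<And>U. U \<in> carrier (F[X]) \<Longrightarrow> eval U t \<otimes> z \<in> Ft \<Longrightarrow>
       \<exists>Q \<in> carrier (F[X]). eval U t = eval B t \<otimes> eval Q t"
    using conductor_generator[OF z] by blast
  have z_carrier: "z \<in> carrier R" using z unfolding is_fraction_def by blast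
  define b where "b = eval B t"
  define A where "A = b \<otimes> z"
  have b: "b \<in> carrier R" "b \<noteq> \<zero>" "b \<in> Ft"
    unfolding b_def using B eval_t_eq_zero_iff Ft_eval by auto
  have A: "A \<in> carrier R" "A \<in> Ft" unfolding A_def using b z_carrier B(3) b_def by auto
  have f_carrier: "\<And>i. i < n \<Longrightarrow> f i \<in> carrier R" using f Ft_carrier by blast
  have "A [^] (n - 1) \<otimes> z = \<ominus> (\<Oplus>i\<in>{..<n}. f i \<otimes> A [^] i \<otimes> b [^] (n - 1 - i))"
    unfolding A_def using integral_equation_times_power[OF z_carrier b(1) f_carrier n root] .
  then have top: "A [^] (n - 1) \<otimes> z \<in> Ft"
    using f A b by (auto intro!: Ft_neg Ft_finsum Ft_mult Ft_pow)
  have descend: "A [^] m \<otimes> z \<in> Ft" if "A [^] Suc m \<otimes> z \<in> Ft" for m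
  proof -
    obtain P where P: "P \<in> carrier (F[X])" "A = eval P t"
      using A(2) mem_Ft_iff by blast
    have U: "P [^]\<^bsub>F[X]\<^esub> Suc m \<in> carrier (F[X])" using P(1) by simp
    have eval_U: "eval (P [^]\<^bsub>F[X]\<^esub> Suc m) t = A [^] Suc m"
      using P eval_t.ring.hom_nat_pow by simp
    have "eval (P [^]\<^bsub>F[X]\<^esub> Suc m) t \<otimes> z \<in> Ft" unfolding eval_U by (rule that)
    then obtain Q where Q: "Q \<in> carrier (F[X])" "A [^] Suc m = b \<otimes> eval Q t"
      using B_divides[OF U] unfolding eval_U b_def by blast
    have "b \<otimes> (A [^] m \<otimes> z) = A [^] Suc m"
      unfolding A_def using b z_carrier by (simp add: m_ac nat_pow_distrib)
    then have "A [^] m \<otimes> z = eval Q t"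
      using Q b A z_carrier m_lcancel[of b "A [^] m \<otimes> z" "eval Q t"] by simp
    then show ?thesis using Ft_eval[OF Q(1)] by simp
  qed
  have "A [^] m \<otimes> z \<in> Ft" if "m \<le> n - 1" for m
    using that top by (induction rule: inc_induct) (auto intro: descend)
  from this[of 0] show ?thesis using z_carrier by simp
qed

lemma bounded_fraction_polyE:
  assumes "bounded_fraction N F t y"
  obtains A B where "A \<in> carrier (F[X])" "B \<in> carrier (F[X])" "degree A \<le> N" "degree B \<le> N"
    "eval B t \<noteq> \<zero>" "y = eval A t \<otimes> inv (eval B t)"
proof -
  obtain a b where ab: "length a \<le> N" "length b \<le> N" "set a \<subseteq> F" "set b \<subseteq> F"
    "eval b t \<noteq> \<zero>" "y = eval a t \<otimes> inv (eval b t)"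
    using assms unfolding bounded_fraction_def by blast
  have "normalize p \<in> carrier (F[X])" "degree (normalize p) \<le> N" "eval (normalize p) t = eval p t"
    if "set p \<subseteq> F" "length p \<le> N" for p
    using that normalize_gives_polynomial[of p F] normalize_length_le[of p]
      eval_normalize[of p t] F_carrier t by (auto simp: univ_poly_carrier[symmetric])
  then show thesis using that[of "normalize a" "normalize b"] ab by simp
qed

lemma bounded_fraction_polyI:
  assumes "A \<in> carrier (F[X])" "B \<in> carrier (F[X])" "degree A \<le> M" "degree B \<le> M" "eval B t \<noteq> \<zero>"
  shows "bounded_fraction (Suc M) F t (eval A t \<otimes> inv (eval B t))"
  unfolding bounded_fraction_def
  using assms polynomial_incl[of F A] polynomial_incl[of F B]
  by (intro exI[of _ A] exI[of _ B]) (auto simp: univ_poly_carrier[symmetric])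

lemma bounded_fraction_family_polyE:
  assumes c: "\<And>i. i \<le> n \<Longrightarrow> bounded_fraction N F t (c i)"
  obtains A B where "\<And>i. i \<le> n \<Longrightarrow> A i \<in> carrier (F[X]) \<and> degree (A i) \<le> N"
    "\<And>i. i \<le> n \<Longrightarrow> B i \<in> carrier (F[X]) \<and> degree (B i) \<le> N \<and> eval (B i) t \<noteq> \<zero>"
    "\<And>i. i \<le> n \<Longrightarrow> c i = eval (A i) t \<otimes> inv (eval (B i) t)"
proof -
  have "\<exists>A' B'. i \<le> n \<longrightarrow> (A' \<in> carrier (F[X]) \<and> degree A' \<le> N) \<and>
      (B' \<in> carrier (F[X]) \<and> degree B' \<le> N \<and> eval B' t \<noteq> \<zero>) \<and> c i = eval A' t \<otimes> inv (eval B' t)" for i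
  proof (cases "i \<le> n")
    case True
    then show ?thesis by (rule bounded_fraction_polyE[OF c]) blast
  qed simp
  then show thesis using that by (metis choice)
qed

lemma common_denominator:
  assumes c: "\<And>i. i \<le> n \<Longrightarrow> bounded_fraction N F t (c i)"
  obtains e d where "\<And>i. i \<le> n \<Longrightarrow> e i \<in> carrier (F[X])" "\<And>i. i \<le> n \<Longrightarrow> degree (e i) \<le> Suc n * N"
    "d \<in> carrier R" "d \<noteq> \<zero>" "\<And>i. i \<le> n \<Longrightarrow> eval (e i) t = d \<otimes> c i"
proof -
  obtain A B where A: "\<And>i. i \<le> n \<Longrightarrow> A i \<in> carrier (F[X]) \<and> degree (A i) \<le> N"
    and B: "\<And>i. i \<le> n \<Longrightarrow> B i \<in> carrier (F[X]) \<and> degree (B i) \<le> N \<and> eval (B i) t \<noteq> \<zero>"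
    and c_eq: "\<And>i. i \<le> n \<Longrightarrow> c i = eval (A i) t \<otimes> inv (eval (B i) t)"
    by (rule bounded_fraction_family_polyE[of n N c, OF c]) auto
  define b where "b = (\<lambda>j. eval (B j) t)"
  have b: "\<And>j. j \<le> n \<Longrightarrow> b j \<in> carrier R \<and> b j \<in> Units R"
    unfolding b_def using B field_Units by auto
  define others where "others = (\<lambda>i. finprod (F[X]) B ({..n} - {i}))"
  define e where "e = (\<lambda>i. A i \<otimes>\<^bsub>F[X]\<^esub> others i)"
  define d where "d = finprod R b {..n}"
  have others: "others i \<in> carrier (F[X])" "degree (others i) \<le> n * N" if "i \<le> n" for i
    using B degree_finprod_le[of "{..n} - {i}" B N] that unfolding others_def
    by (auto intro: eval_t.R.finprod_closed)
  have "e i \<in> carrier (F[X]) \<and> degree (e i) \<le> Suc n * N" if "i \<le> n" for i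
    unfolding e_def using A[OF that] others[OF that] degree_mult_le[of "A i" "others i"] by auto
  moreover have "d \<in> carrier R" "d \<noteq> \<zero>"
    unfolding d_def using b B finprod_neq_zero[of "{..n}" b] by (auto simp: b_def)
  moreover have "eval (e i) t = d \<otimes> c i" if i: "i \<le> n" for i
  proof -
    have b_others: "finprod R b ({..n} - {i}) \<in> carrier R" using b by auto
    have others_eval: "eval (others i) t = finprod R b ({..n} - {i})"
      unfolding others_def b_def using B by (subst eval_t.hom_finprod) (auto simp: comp_def)
    have d_split: "d = b i \<otimes> finprod R b ({..n} - {i})"
      unfolding d_def using b i by (subst finprod_insert[symmetric]) (auto simp: insert_absorb)
    have c_eq_b: "c i = eval (A i) t \<otimes> inv (b i)" using c_eq[OF i] unfolding b_def by simp
    then have c_carrier: "c i \<in> carrier R" using A[OF i] b[OF i] by simp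
    have "b i \<otimes> c i = eval (A i) t \<otimes> (b i \<otimes> inv (b i))"
      unfolding c_eq_b using A[OF i] b[OF i] m_lcomm[of "b i" "eval (A i) t" "inv (b i)"] by simp
    then have bc: "b i \<otimes> c i = eval (A i) t" using A[OF i] b[OF i] by simp
    have "d \<otimes> c i = eval (others i) t \<otimes> (b i \<otimes> c i)"
      unfolding d_split others_eval using b[OF i] b_others c_carrier by (simp add: m_ac)
    also have "\<dots> = eval (A i) t \<otimes> eval (others i) t"
      unfolding bc using A[OF i] others[OF i] by (simp add: m_comm)
    also have "\<dots> = eval (e i) t"
      unfolding e_def using A[OF i] others[OF i] by simp
    finally show ?thesis by simp
  qed
  ultimately show thesis using that by blast
qed

text \<open>Scaling a root $x \in F(t)$ of $\sum_{i \le n} e_i X^i$ by $e_n(t)$ makes it integral over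
  $F[t]$, hence a polynomial in $t$, and its degree is at most $\max_i \deg e_i$.\<close>

lemma leading_coeff_times_root_poly:
  fixes n M :: nat
  assumes x: "is_fraction x"
    and e: "\<And>i. i \<le> n \<Longrightarrow> e i \<in> carrier (F[X])" "\<And>i. i \<le> n \<Longrightarrow> degree (e i) \<le> M"
    and n: "0 < n" and root: "(\<Oplus>i\<in>{..n}. eval (e i) t \<otimes> x [^] i) = \<zero>"
  obtains Y where "Y \<in> carrier (F[X])" "degree Y \<le> M" "eval (e n) t \<otimes> x = eval Y t"
proof -
  have x_carrier: "x \<in> carrier R" using x unfolding is_fraction_def by blast
  define g where "g = (\<lambda>i. e i \<otimes>\<^bsub>F[X]\<^esub> e n [^]\<^bsub>F[X]\<^esub> (n - 1 - i))"
  have g: "g i \<in> carrier (F[X])" "eval (g i) t = eval (e i) t \<otimes> eval (e n) t [^] (n - 1 - i)"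
    if "i < n" for i
  proof -
    have "e n [^]\<^bsub>F[X]\<^esub> (n - 1 - i) \<in> carrier (F[X])" using e(1) by simp
    moreover have "eval (e n [^]\<^bsub>F[X]\<^esub> (n - 1 - i)) t = eval (e n) t [^] (n - 1 - i)"
      using e(1) eval_t.ring.hom_nat_pow by simp
    ultimately show "g i \<in> carrier (F[X])" "eval (g i) t = eval (e i) t \<otimes> eval (e n) t [^] (n - 1 - i)"
      unfolding g_def using e(1) that by simp_all
  qed
  have g_degree: "degree (g i) \<le> (n - i) * M" if i: "i < n" for i
  proof -
    have "degree (g i) \<le> degree (e i) + (n - 1 - i) * degree (e n)"
      unfolding g_def using degree_mult_le[of "e i" "e n [^]\<^bsub>F[X]\<^esub> (n - 1 - i)"]
        degree_pow[of "e n" "n - 1 - i"] e(1) i by simp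
    also have "\<dots> \<le> M + (n - 1 - i) * M" using e(2) i by (intro add_mono mult_le_mono2) auto
    also have "\<dots> = (n - i) * M" using i by (simp add: Suc_diff_Suc[symmetric])
    finally show ?thesis .
  qed
  have "(\<Oplus>i\<in>{..<n}. eval (g i) t \<otimes> (eval (e n) t \<otimes> x) [^] i)
      = (\<Oplus>i\<in>{..<n}. (eval (e i) t \<otimes> eval (e n) t [^] (n - 1 - i)) \<otimes> (eval (e n) t \<otimes> x) [^] i)"
    using e(1) g x_carrier by (intro finsum_cong') auto
  then have monic: "(eval (e n) t \<otimes> x) [^] n \<oplus> (\<Oplus>i\<in>{..<n}. eval (g i) t \<otimes> (eval (e n) t \<otimes> x) [^] i) = \<zero>"
    using leading_coeff_times_root[where e = "\<lambda>i. eval (e i) t", OF x_carrier _ root n] e(1) by simp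
  have "eval (e n) t \<otimes> x \<in> Ft"
    using integral_fraction_mem_Ft[where f = "\<lambda>i. eval (g i) t", OF _ _ n monic]
      is_fraction_mult[OF is_fraction_poly[OF e(1)] x] g(1) Ft_eval by blast
  then obtain Y where Y: "Y \<in> carrier (F[X])" "eval (e n) t \<otimes> x = eval Y t"
    using mem_Ft_iff by blast
  moreover have "degree Y \<le> M"
    using degree_le_of_monic_root[OF Y(1) g(1) g_degree n] monic unfolding Y(2) by blast
  ultimately show thesis using that by blast
qed

lemma bounded_fraction_of_poly_root:
  fixes n M :: nat
  assumes x: "is_fraction x"
    and e: "\<And>i. i \<le> n \<Longrightarrow> e i \<in> carrier (F[X])" "\<And>i. i \<le> n \<Longrightarrow> degree (e i) \<le> M"
    and lead: "eval (e n) t \<noteq> \<zero>" and root: "(\<Oplus>i\<in>{..n}. eval (e i) t \<otimes> x [^] i) = \<zero>"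
  shows "bounded_fraction (Suc M) F t x"
proof -
  have x_carrier: "x \<in> carrier R" using x unfolding is_fraction_def by blast
  have "0 < n"
  proof (rule ccontr)
    assume "\<not> 0 < n"
    then show False using root lead e(1)[of 0] by (simp add: finsum_0)
  qed
  then obtain Y where Y: "Y \<in> carrier (F[X])" "degree Y \<le> M" "eval (e n) t \<otimes> x = eval Y t"
    using leading_coeff_times_root_poly[OF x e _ root] by blast
  have E: "eval (e n) t \<in> Units R" "eval (e n) t \<in> carrier R" using lead e(1) field_Units by auto
  have "eval Y t \<otimes> inv (eval (e n) t) = x \<otimes> (eval (e n) t \<otimes> inv (eval (e n) t))"
    unfolding Y(3)[symmetric] using E x_carrier
    by (simp add: m_comm[of "eval (e n) t" x] m_assoc del: Units_r_inv)
  then have "x = eval Y t \<otimes> inv (eval (e n) t)" using E x_carrier by simp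
  then show ?thesis
    using bounded_fraction_polyI[OF Y(1) e(1) Y(2) e(2) lead] by simp
qed

lemma bounded_fraction_of_root:
  assumes x: "x \<in> generate_field R (insert t F)"
    and c: "\<And>i. i \<le> n \<Longrightarrow> bounded_fraction N F t (c i)" "c n \<noteq> \<zero>"
    and root: "(\<Oplus>i\<in>{..n}. c i \<otimes> x [^] i) = \<zero>"
  shows "bounded_fraction (Suc (Suc n * N)) F t x"
proof -
  obtain e d where e: "\<And>i. i \<le> n \<Longrightarrow> e i \<in> carrier (F[X])" "\<And>i. i \<le> n \<Longrightarrow> degree (e i) \<le> Suc n * N"
    and d: "d \<in> carrier R" "d \<noteq> \<zero>" and e_eval: "\<And>i. i \<le> n \<Longrightarrow> eval (e i) t = d \<otimes> c i"
    using common_denominator[where c = c, OF c(1)] by blast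
  have x_fraction: "is_fraction x" using generate_field_is_fraction[OF x] .
  then have x_carrier: "x \<in> carrier R" unfolding is_fraction_def by blast
  have c_carrier: "\<And>i. i \<le> n \<Longrightarrow> c i \<in> carrier R" using c(1) bounded_fraction_closed[OF F_carrier t] by blast
  have "(\<Oplus>i\<in>{..n}. eval (e i) t \<otimes> x [^] i) = d \<otimes> (\<Oplus>i\<in>{..n}. c i \<otimes> x [^] i)"
  proof -
    have "(\<Oplus>i\<in>{..n}. eval (e i) t \<otimes> x [^] i) = (\<Oplus>i\<in>{..n}. d \<otimes> (c i \<otimes> x [^] i))"
      using d c_carrier x_carrier e_eval by (intro finsum_cong') (auto simp: m_assoc)
    then show ?thesis using d c_carrier x_carrier by (simp add: finsum_rdistr)
  qed
  then have "(\<Oplus>i\<in>{..n}. eval (e i) t \<otimes> x [^] i) = \<zero>" using root d by simp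
  moreover have "eval (e n) t \<noteq> \<zero>" using e_eval[of n] d c(2) c_carrier[of n] by (simp add: integral_iff)
  ultimately show ?thesis using bounded_fraction_of_poly_root[where e = e and n = n, OF x_fraction e] by blast
qed

end

section \<open>The ultraproduct\<close>

lemma (in ring) eval_mem_subring:
  assumes K: "subring K R" and "set a \<subseteq> K" "y \<in> K" shows "eval a y \<in> K"
  using assms(2)
proof (induction a)
  case (Cons h a)
  have "y [^] (k::nat) \<in> K" for k using assms(3) by (induction k) (auto simp: subringE(3,6)[OF K])
  then have "y [^] length a \<in> K" .
  then show ?case using Cons subringE(6,7)[OF K] by simp
qed (simp add: subringE(2)[OF K])

lemma (in field) bounded_fraction_mem_generate_field:
  assumes F: "subfield F R" and u: "u \<in> carrier R" and y: "bounded_fraction N F u y"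
  shows "y \<in> generate_field R (insert u F)"
proof -
  define K where "K = generate_field R (insert u F)"
  have F_carrier: "F \<subseteq> carrier R" using subfieldE(3)[OF F] .
  have K: "subfield K R" unfolding K_def using generate_field_is_subfield F_carrier u by simp
  have K_ring: "subring K R" using subfieldE(1)[OF K] .
  have FK: "insert u F \<subseteq> K" unfolding K_def by (auto intro: generate_field.incl)
  obtain a b where ab: "set a \<subseteq> F" "set b \<subseteq> F" "eval b u \<noteq> \<zero>" "y = eval a u \<otimes> inv (eval b u)"
    using y unfolding bounded_fraction_def by blast
  have "eval a u \<in> K" "eval b u \<in> K"
    using eval_mem_subring[OF K_ring] ab(1,2) FK by auto
  then show ?thesis
    unfolding K_def[symmetric] ab(4)
    using subfield_m_inv(1)[OF K] ab(3) subringE(6)[OF K_ring] by blast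
qed

lemma (in ring) bounded_fraction_mono:
  "bounded_fraction N K u y \<Longrightarrow> N \<le> N' \<Longrightarrow> bounded_fraction N' K u y"
  unfolding bounded_fraction_def by (fastforce intro: le_trans)

lemma in_IF_iff_eventually_bounded_fraction:
  assumes "\<And>s. ring (\<Omega> s)"
  shows "in_IF D \<Omega> Fq t x \<longleftrightarrow>
    (\<exists>N. eventually (\<lambda>s. ring.bounded_fraction (\<Omega> s) N (Fq s) (t s) (x s)) D)"
  unfolding in_IF_def ring.bounded_fraction_def[OF assms] eventually_ex ..

lemma in_IF_uniform_bound:
  fixes n :: nat
  assumes ring: "\<And>s. ring (\<Omega> s)" and c: "\<forall>i\<le>n. in_IF D \<Omega> Fq t (c i)"
  obtains N where "eventually (\<lambda>s. \<forall>i\<le>n. ring.bounded_fraction (\<Omega> s) N (Fq s) (t s) (c i s)) D"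
proof -
  have "\<forall>i\<in>{..n}. \<exists>N. eventually (\<lambda>s. ring.bounded_fraction (\<Omega> s) N (Fq s) (t s) (c i s)) D"
    using c in_IF_iff_eventually_bounded_fraction[where \<Omega> = \<Omega>, OF ring] by simp
  then obtain M where M: "\<forall>i\<in>{..n}. eventually (\<lambda>s. ring.bounded_fraction (\<Omega> s) (M i) (Fq s) (t s) (c i s)) D"
    by (metis bchoice)
  have "\<forall>i\<in>{..n}. eventually (\<lambda>s. ring.bounded_fraction (\<Omega> s) (Max (M ` {..n})) (Fq s) (t s) (c i s)) D"
  proof
    fix i assume i: "i \<in> {..n}"
    have le: "M i \<le> Max (M ` {..n})" using i by simp
    show "eventually (\<lambda>s. ring.bounded_fraction (\<Omega> s) (Max (M ` {..n})) (Fq s) (t s) (c i s)) D"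
      using bspec[OF M i] by (rule eventually_mono) (rule ring.bounded_fraction_mono[OF ring _ le])
  qed
  then have "eventually (\<lambda>s. \<forall>i\<in>{..n}. ring.bounded_fraction (\<Omega> s) (Max (M ` {..n})) (Fq s) (t s) (c i s)) D"
    by (rule eventually_ball_finite[OF finite_atMost])
  then show thesis using that[of "Max (M ` {..n})"] by (simp add: Ball_def)
qed

lemma eventually_char_gt:
  assumes D: "nonprincipal_ultrafilter D" and p: "\<And>s. prime (p s :: nat)"
    and no_char: "\<And>P. prime (P :: nat) \<Longrightarrow> \<not> eventually (\<lambda>s. p s = P) D"
  shows "eventually (\<lambda>s. n < p s) D"
proof -
  have "\<forall>m\<in>{..n}. eventually (\<lambda>s. p s \<noteq> m) D"
  proof
    fix m assume "m \<in> {..n}"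
    show "eventually (\<lambda>s. p s \<noteq> m) D"
    proof (cases "prime m")
      case True
      then show ?thesis using no_char D unfolding nonprincipal_ultrafilter_def by blast
    next
      case False
      then show ?thesis using p by (metis (mono_tags) always_eventually)
    qed
  qed
  then have "eventually (\<lambda>s. \<forall>m\<in>{..n}. p s \<noteq> m) D"
    by (rule eventually_ball_finite[OF finite_atMost])
  then show ?thesis
    by (rule eventually_mono) (metis atMost_iff not_less)
qed

lemma (in field) artin_schreier_root_bounded_fraction:
  fixes n N :: nat
  assumes closure: "algebraic_closure R (generate_field R (insert t F))"
    and F: "subfield F R" and t: "t \<in> carrier R" "transcendental F t"
    and p: "prime p" and char: "[p] \<cdot> \<one> = \<zero>"
    and \<alpha>: "\<alpha> \<in> carrier R" "\<alpha> \<notin> generate_field R (insert t F)"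
      "\<alpha> [^] p \<ominus> \<alpha> \<in> generate_field R (insert t F)"
    and x: "x \<in> generate_field R (insert \<alpha> (generate_field R (insert t F)))"
    and c: "\<And>i. i \<le> n \<Longrightarrow> bounded_fraction N F t (c i)" "c n \<noteq> \<zero>"
      "(\<Oplus>i\<in>{..n}. c i \<otimes> x [^] i) = \<zero>"
    and n: "n < p"
  shows "bounded_fraction (Suc (Suc n * N)) F t x"
proof -
  interpret K: algebraic_closure R "generate_field R (insert t F)" by (rule closure)
  interpret rational_function_field R F t
    using F t by (intro rational_function_field.intro rational_function_field_axioms.intro field_axioms)
      (simp_all add: over_def)
  have "x \<in> generate_field R (insert t F)"
    using artin_schreier_low_degree_mem_base[OF K.algebraically_closed_axioms K.subfield_axioms p char \<alpha> x
        bounded_fraction_mem_generate_field[OF F t(1) c(1)] c(2,3) n] .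
  then show ?thesis using bounded_fraction_of_root c by blast
qed

lemma nonprincipal_ultrafilter_not_eventually:
  "nonprincipal_ultrafilter D \<Longrightarrow> \<not> eventually P D \<Longrightarrow> eventually (\<lambda>s. \<not> P s) D"
  unfolding nonprincipal_ultrafilter_def by blast

lemma artin_schreier_ultraproduct_in_IF:
  fixes D :: "'s filter"
  assumes D: "nonprincipal_ultrafilter D"
    and F: "\<And>s. subfield (Fq s) (\<Omega> s)" and p: "\<And>s. prime (p s)"
    and char: "\<And>s. [p s] \<cdot>\<^bsub>\<Omega> s\<^esub> \<one>\<^bsub>\<Omega> s\<^esub> = \<zero>\<^bsub>\<Omega> s\<^esub>"
    and t: "\<And>s. t s \<in> carrier (\<Omega> s) \<and> ring.transcendental (\<Omega> s) (Fq s) (t s)"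
    and closure: "\<And>s. algebraic_closure (\<Omega> s) (ratfield \<Omega> Fq t s)"
    and no_char: "\<And>P. prime (P :: nat) \<Longrightarrow> \<not> eventually (\<lambda>s. p s = P) D"
    and AS: "eventually (\<lambda>s. \<alpha> s \<in> carrier (\<Omega> s) \<and>
               \<alpha> s \<notin> ratfield \<Omega> Fq t s \<and>
               (\<alpha> s [^]\<^bsub>\<Omega> s\<^esub> p s) \<ominus>\<^bsub>\<Omega> s\<^esub> \<alpha> s \<in> ratfield \<Omega> Fq t s \<and>
               L s = generate_field (\<Omega> s) (insert (\<alpha> s) (ratfield \<Omega> Fq t s))) D"
    and x_L: "eventually (\<lambda>s. x s \<in> L s) D" and x_alg: "alg_over_IF D \<Omega> Fq t x"
  shows "in_IF D \<Omega> Fq t x"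
proof -
  have field: "\<And>s. field (\<Omega> s)" using closure algebraic_closure.axioms(1) by blast
  then have ring: "\<And>s. ring (\<Omega> s)" by (simp add: field_def domain_def cring_def)
  obtain n :: nat and c where c_IF: "\<forall>i\<le>n. in_IF D \<Omega> Fq t (c i)"
    and c_lead: "\<not> eventually (\<lambda>s. c n s = \<zero>\<^bsub>\<Omega> s\<^esub>) D"
    and root: "eventually (\<lambda>s. (\<Oplus>\<^bsub>\<Omega> s\<^esub> i\<in>{..n}. c i s \<otimes>\<^bsub>\<Omega> s\<^esub> (x s [^]\<^bsub>\<Omega> s\<^esub> i)) = \<zero>\<^bsub>\<Omega> s\<^esub>) D"
    using x_alg unfolding alg_over_IF_def by blast
  obtain N where c_bounded: "eventually (\<lambda>s. \<forall>i\<le>n. ring.bounded_fraction (\<Omega> s) N (Fq s) (t s) (c i s)) D"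
    using in_IF_uniform_bound[OF ring c_IF] by blast
  have p_large: "eventually (\<lambda>s. n < p s) D"
    by (rule eventually_char_gt[OF D p no_char])
  have "eventually (\<lambda>s. ring.bounded_fraction (\<Omega> s) (Suc (Suc n * N)) (Fq s) (t s) (x s)) D"
    using nonprincipal_ultrafilter_not_eventually[OF D c_lead] p_large
      x_L AS c_bounded root
  proof eventually_elim
    case (elim s)
    let ?K = "generate_field (\<Omega> s) (insert (t s) (Fq s))"
    have \<alpha>: "\<alpha> s \<in> carrier (\<Omega> s)" "\<alpha> s \<notin> ?K" "\<alpha> s [^]\<^bsub>\<Omega> s\<^esub> p s \<ominus>\<^bsub>\<Omega> s\<^esub> \<alpha> s \<in> ?K"
      and x: "x s \<in> generate_field (\<Omega> s) (insert (\<alpha> s) ?K)"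
      using elim(3,4) unfolding ratfield_def by auto
    show ?case
      by (rule field.artin_schreier_root_bounded_fraction[OF field[of s] closure[of s, unfolded ratfield_def]
            F[of s] t[of s, THEN conjunct1] t[of s, THEN conjunct2] p[of s] char[of s] \<alpha> x])
        (use elim in auto)
  qed
  then show ?thesis using in_IF_iff_eventually_bounded_fraction[where \<Omega> = \<Omega>, OF ring] by blast
qed

lemma (in field) bounded_fraction_minus_one:
  assumes "subfield K R" "u \<in> carrier R" shows "bounded_fraction 1 K u (\<ominus> \<one>)"
  unfolding bounded_fraction_def using assms subringE(3,5)[OF subfieldE(1)[OF assms(1)]]
  by (intro exI[of _ "[\<ominus> \<one>]"] exI[of _ "[\<one>]"]) simp

lemma in_IF_imp_alg_over_IF:
  fixes D :: "'s filter"
  assumes D: "D \<noteq> bot" and field: "\<And>s. field (\<Omega> s)"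
    and F: "\<And>s. subfield (Fq s) (\<Omega> s)" and t: "\<And>s. t s \<in> carrier (\<Omega> s)"
    and x: "in_IF D \<Omega> Fq t x"
  shows "alg_over_IF D \<Omega> Fq t x"
proof -
  have ring: "\<And>s. ring (\<Omega> s)" using field by (simp add: field_def domain_def cring_def)
  define c :: "nat \<Rightarrow> _" where "c = (\<lambda>i. if i = 0 then x else (\<lambda>s. \<ominus>\<^bsub>\<Omega> s\<^esub> \<one>\<^bsub>\<Omega> s\<^esub>))"
  obtain N where x_bounded: "eventually (\<lambda>s. ring.bounded_fraction (\<Omega> s) N (Fq s) (t s) (x s)) D"
    using x in_IF_iff_eventually_bounded_fraction[where \<Omega> = \<Omega>, OF ring] by blast
  then have x_carrier: "eventually (\<lambda>s. x s \<in> carrier (\<Omega> s)) D"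
    by (rule eventually_mono) (use field.bounded_fraction_closed[OF field subfieldE(3)[OF F] t] in blast)
  have "ring.bounded_fraction (\<Omega> s) 1 (Fq s) (t s) (c 1 s)" for s
    unfolding c_def using field.bounded_fraction_minus_one[OF field F t] by simp
  then have "eventually (\<lambda>s. ring.bounded_fraction (\<Omega> s) 1 (Fq s) (t s) (c 1 s)) D"
    by (simp add: always_eventually)
  then have "in_IF D \<Omega> Fq t (c 1)"
    using in_IF_iff_eventually_bounded_fraction[where \<Omega> = \<Omega>, OF ring] by blast
  then have c_IF: "\<forall>i\<le>1. in_IF D \<Omega> Fq t (c i)" using x by (auto simp: c_def le_Suc_eq)
  have "\<not> eventually (\<lambda>s. c 1 s = \<zero>\<^bsub>\<Omega> s\<^esub>) D"
  proof
    assume "eventually (\<lambda>s. c 1 s = \<zero>\<^bsub>\<Omega> s\<^esub>) D"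
    moreover have "c 1 s \<noteq> \<zero>\<^bsub>\<Omega> s\<^esub>" for s
    proof -
      interpret field "\<Omega> s" by (rule field)
      show ?thesis unfolding c_def using l_neg[OF one_closed] one_not_zero by force
    qed
    ultimately show False using D by (simp add: eventually_False)
  qed
  moreover have "eventually (\<lambda>s. (\<Oplus>\<^bsub>\<Omega> s\<^esub> i\<in>{..1}. c i s \<otimes>\<^bsub>\<Omega> s\<^esub> (x s [^]\<^bsub>\<Omega> s\<^esub> i)) = \<zero>\<^bsub>\<Omega> s\<^esub>) D"
    using x_carrier
  proof eventually_elim
    case (elim s)
    interpret field "\<Omega> s" by (rule field)
    show ?case using elim by (simp add: c_def finsum_Suc finsum_0 l_minus l_neg)
  qed
  ultimately show ?thesis
    unfolding alg_over_IF_def using x_carrier c_IF by blast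
qed

lemma in_IF_imp_eventually_mem_ratfield:
  fixes D :: "'s filter"
  assumes field: "\<And>s. field (\<Omega> s)"
    and F: "\<And>s. subfield (Fq s) (\<Omega> s)" and t: "\<And>s. t s \<in> carrier (\<Omega> s)"
    and x: "in_IF D \<Omega> Fq t x"
  shows "eventually (\<lambda>s. x s \<in> ratfield \<Omega> Fq t s) D"
proof -
  have ring: "\<And>s. ring (\<Omega> s)" using field by (simp add: field_def domain_def cring_def)
  obtain N where "eventually (\<lambda>s. ring.bounded_fraction (\<Omega> s) N (Fq s) (t s) (x s)) D"
    using x in_IF_iff_eventually_bounded_fraction[where \<Omega> = \<Omega>, OF ring] by blast
  then show ?thesis
    unfolding ratfield_def
    by (rule eventually_mono) (rule field.bounded_fraction_mem_generate_field[OF field F t])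
qed

theorem mainTheorem14:
  fixes D :: "'s filter"
    and \<Omega> :: "'s \<Rightarrow> 'b ring"      \<comment> \<open>\<Omega> s = the fixed algebraic closure of F_s(t)\<close>
    and Fq :: "'s \<Rightarrow> 'b set"       \<comment> \<open>the finite field F_s, as a subfield of \<Omega> s\<close>
    and t :: "'s \<Rightarrow> 'b"            \<comment> \<open>the variable t in \<Omega> s\<close>
    and p :: "'s \<Rightarrow> nat"
    and \<alpha> :: "'s \<Rightarrow> 'b"
    and L :: "'s \<Rightarrow> 'b set"        \<comment> \<open>the Artin-Schreier extensions L_s\<close>
  assumes S_inf: "infinite (UNIV :: 's set)"
    and D: "nonprincipal_ultrafilter D"
    and fin: "\<And>s. subfield (Fq s) (\<Omega> s) \<and> finite (Fq s) \<and> prime (p s) \<and>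
                   (\<exists>k. k \<ge> 1 \<and> card (Fq s) = p s ^ k)"
    and trans: "\<And>s. t s \<in> carrier (\<Omega> s) \<and> ring.transcendental (\<Omega> s) (Fq s) (t s)"
    and closure: "\<And>s. algebraic_closure (\<Omega> s) (ratfield \<Omega> Fq t s)"
    and no_char: "\<And>P. prime (P :: nat) \<Longrightarrow> \<not> eventually (\<lambda>s. p s = P) D"
    and AS: "eventually (\<lambda>s. \<alpha> s \<in> carrier (\<Omega> s) \<and>
               \<alpha> s \<notin> ratfield \<Omega> Fq t s \<and>
               (\<alpha> s [^]\<^bsub>\<Omega> s\<^esub> p s) \<ominus>\<^bsub>\<Omega> s\<^esub> \<alpha> s \<in> ratfield \<Omega> Fq t s \<and>
               L s = generate_field (\<Omega> s) (insert (\<alpha> s) (ratfield \<Omega> Fq t s))) D"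
  shows "\<forall>x :: 's \<Rightarrow> 'b.
           (eventually (\<lambda>s. x s \<in> L s) D \<and> alg_over_IF D \<Omega> Fq t x) \<longleftrightarrow> in_IF D \<Omega> Fq t x"
proof -
  have field: "\<And>s. field (\<Omega> s)" using closure algebraic_closure.axioms(1) by blast
  have char: "[p s] \<cdot>\<^bsub>\<Omega> s\<^esub> \<one>\<^bsub>\<Omega> s\<^esub> = \<zero>\<^bsub>\<Omega> s\<^esub>" for s
    using fin[of s] domain.char_of_card_subfield[OF field.axioms(1)[OF field]] by blast
  show ?thesis
  proof (intro allI iffI)
    fix x assume "eventually (\<lambda>s. x s \<in> L s) D \<and> alg_over_IF D \<Omega> Fq t x"
    then show "in_IF D \<Omega> Fq t x"
      using artin_schreier_ultraproduct_in_IF[OF D _ _ char trans closure no_char AS] fin by blast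
  next
    fix x assume x: "in_IF D \<Omega> Fq t x"
    have "eventually (\<lambda>s. x s \<in> ratfield \<Omega> Fq t s) D"
      using in_IF_imp_eventually_mem_ratfield[OF field _ _ x] fin trans by blast
    then have "eventually (\<lambda>s. x s \<in> L s) D"
      using AS by eventually_elim (auto intro: generate_field.incl)
    moreover have "D \<noteq> bot" using D unfolding nonprincipal_ultrafilter_def by blast
    ultimately show "eventually (\<lambda>s. x s \<in> L s) D \<and> alg_over_IF D \<Omega> Fq t x"
      using in_IF_imp_alg_over_IF[OF _ field _ _ x] fin trans by blast
  qed
qed

end
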